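(* Let $S$ be a dense subsemigroup of $((0,\infty),+)$ and let $A\subseteq S$. Then $A$ is quasi-central near zero if and only if there exist a dynamical system $(X,\langle T_s\rangle_{s\in S})$, points $x,y\in X$ such that the pair $(x,y)$ is $JIUR_0$, and a neighbourhood $U$ of $y$ such that $A=\{s\in S: T_s(x)\in U\}$.
   Context: "Dense" means dense in the usual topology of $(0,\infty)$. $\beta S$ is the Stone–Čech compactification of the discrete set $S$ (ultrafilters on $S$), with $+$ extended so that $(\beta S,+)$ is a compact right topological semigroup: $A\in p+q$ iff $\{x\in S:-x+A\in q\}\in p$, where $-x+A=\{y\in S:x+y\in A\}$. $O^{+}(S)=\{p\in\beta S: S\cap(0,\epsilon)\in p\text{ for every }\epsilon>0\}$, a compact right topological subsemigroup of $\beta S$; $K(O^{+}(S))$ is its smallest two-sided ideal and $\mathrm{Cl}$ is closure in $\beta S$. A set $A\subseteq S$ is quasi-central near zero iff there is an idempotent $p\in\mathrm{Cl}\,K(O^{+}(S))$ with $A\in p$. A dynamical system $(X,\langle T_s\rangle_{s\in S})$ consists of a compact Hausdorff space $X$ and continuous maps $T_s:X\to X$ with $T_s\circ T_t=T_{s+t}$. A subset $A\subseteq S$ is piecewise syndetic near zero iff there exist sequences $\langle F_n\rangle$ and $\langle\delta_n\rangle$ such that (1) for each $n$, $F_n$ is a finite nonempty subset of $(0,\frac1n)\cap S$ and $\delta_n\in(0,\frac1n)$, and (2) for every finite nonempty $G\subseteq S$ and every $\mu>0$ there is $x\in(0,\mu)\cap S$ with $(G\cap(0,\delta_n))+x\subseteq\bigcup_{t\in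 F_n}(-t+A)$ for all $n\in\mathbb{N}$. The pair $(x,y)$ is $JIUR_0$ (jointly intermittently uniformly recurrent near zero) iff for every neighbourhood $U$ of $y$, the set $\{s\in S: T_s(x)\in U\text{ and }T_s(y)\in U\}$ is piecewise syndetic near zero. *)

theory Defs
  imports "HOL-Analysis.Analysis"
begin

definition dense_subsemigroup :: "real set \<Rightarrow> bool" where
  "dense_subsemigroup S \<longleftrightarrow>
     S \<subseteq> {0<..} \<and> (\<forall>s\<in>S. \<forall>t\<in>S. s + t \<in> S) \<and>
     (\<forall>a b. 0 < a \<and> a < b \<longrightarrow> (\<exists>s\<in>S. a < s \<and> s < b))"

definition lshift :: "real set \<Rightarrow> real \<Rightarrow> real set \<Rightarrow> real set" where
  "lshift S x A = {y\<in>S. x + y \<in> A}"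

section \<open>Stone-Cech compactification of discrete S as ultrafilters\<close>

definition is_ultrafilter :: "real set \<Rightarrow> real set set \<Rightarrow> bool" where
  "is_ultrafilter S p \<longleftrightarrow>
     p \<subseteq> Pow S \<and> S \<in> p \<and> {} \<notin> p \<and>
     (\<forall>A\<in>p. \<forall>B. A \<subseteq> B \<and> B \<subseteq> S \<longrightarrow> B \<in> p) \<and>
     (\<forall>A\<in>p. \<forall>B\<in>p. A \<inter> B \<in> p) \<and>
     (\<forall>A. A \<subseteq> S \<longrightarrow> A \<in> p \<or> S - A \<in> p)"

definition betaS :: "real set \<Rightarrow> real set set set" where
  "betaS S = {p. is_ultrafilter S p}"

definition uplus :: "real set \<Rightarrow> real set set \<Rightarrow> real set set \<Rightarrow> real set set" where
  "uplus S p q = {A. A \<subseteq> S \<and> {x\<in>S. lshift S x A \<in> q} \<in> p}"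

definition Oplus :: "real set \<Rightarrow> real set set set" where
  "Oplus S = {p\<in>betaS S. \<forall>\<epsilon>>0. S \<inter> {0<..<\<epsilon>} \<in> p}"

text \<open>Two-sided ideals of a subsemigroup T of betaS, and the smallest ideal K(T)
  (the intersection of all ideals; it is the smallest ideal whenever one exists,
  as is the case for compact right topological semigroups).\<close>
definition is_ideal :: "real set \<Rightarrow> real set set set \<Rightarrow> real set set set \<Rightarrow> bool" where
  "is_ideal S T I \<longleftrightarrow> I \<noteq> {} \<and> I \<subseteq> T \<and>
     (\<forall>p\<in>T. \<forall>q\<in>I. uplus S p q \<in> I \<and> uplus S q p \<in> I)"

definition Kideal :: "real set \<Rightarrow> real set set set \<Rightarrow> real set set set" where
  "Kideal S T = \<Inter>{I. is_ideal S T I}"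

text \<open>Closure in betaS (basic open sets are {p. A in p}).\<close>
definition betaCl :: "real set \<Rightarrow> real set set set \<Rightarrow> real set set set" where
  "betaCl S P = {p\<in>betaS S. \<forall>A\<in>p. \<exists>q\<in>P. A \<in> q}"

definition quasi_central_near_zero :: "real set \<Rightarrow> real set \<Rightarrow> bool" where
  "quasi_central_near_zero S A \<longleftrightarrow>
     (\<exists>p\<in>betaCl S (Kideal S (Oplus S)). uplus S p p = p \<and> A \<in> p)"

definition piecewise_syndetic_near_zero :: "real set \<Rightarrow> real set \<Rightarrow> bool" where
  "piecewise_syndetic_near_zero S A \<longleftrightarrow>
     (\<exists>F :: nat \<Rightarrow> real set. \<exists>\<delta> :: nat \<Rightarrow> real.
        (\<forall>n\<ge>1. finite (F n) \<and> F n \<noteq> {} \<and> F n \<subseteq> {0<..<1 / real n} \<inter> S \<and>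
                0 < \<delta> n \<and> \<delta> n < 1 / real n) \<and>
        (\<forall>G. finite G \<and> G \<noteq> {} \<and> G \<subseteq> S \<longrightarrow>
           (\<forall>\<mu>>0. \<exists>x\<in>{0<..<\<mu>} \<inter> S. \<forall>n\<ge>1.
              (\<lambda>g. g + x) ` (G \<inter> {0<..<\<delta> n}) \<subseteq> (\<Union>t\<in>F n. lshift S t A))))"

definition dynamical_system :: "real set \<Rightarrow> 'a topology \<Rightarrow> (real \<Rightarrow> 'a \<Rightarrow> 'a) \<Rightarrow> bool" where
  "dynamical_system S X T \<longleftrightarrow> compact_space X \<and> Hausdorff_space X \<and>
     (\<forall>s\<in>S. continuous_map X X (T s)) \<and>
     (\<forall>s\<in>S. \<forall>t\<in>S. \<forall>z\<in>topspace X. T s (T t z) = T (s + t) z)"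

definition is_nbhd :: "'a topology \<Rightarrow> 'a set \<Rightarrow> 'a \<Rightarrow> bool" where
  "is_nbhd X U y \<longleftrightarrow> U \<subseteq> topspace X \<and> (\<exists>V. openin X V \<and> y \<in> V \<and> V \<subseteq> U)"

definition JIUR0 :: "real set \<Rightarrow> 'a topology \<Rightarrow> (real \<Rightarrow> 'a \<Rightarrow> 'a) \<Rightarrow> 'a \<Rightarrow> 'a \<Rightarrow> bool" where
  "JIUR0 S X T x y \<longleftrightarrow>
     (\<forall>U. is_nbhd X U y \<longrightarrow>
        piecewise_syndetic_near_zero S {s\<in>S. T s x \<in> U \<and> T s y \<in> U})"

end

theory Submission
  imports Defs
begin

text \<open>Piecewise syndeticity near zero characterises the sets lying in some member of the smallest
  ideal \<open>K\<close> of \<open>O\<^sup>+(S)\<close>: a member \<open>q\<close> of \<open>K\<close> is reached back from every element of the compact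
  left ideal \<open>O\<^sup>+(S) + q\<close>, and compactness turns this into the finite families of translates
  required by the definition.

  If \<open>(x, y)\<close> is \<open>JIUR\<^sub>0\<close>, the ultrafilters in \<open>cl K\<close> containing all joint return sets
  \<open>{s. T\<^sub>s x \<in> V \<and> T\<^sub>s y \<in> V}\<close> of neighbourhoods \<open>V\<close> of \<open>y\<close> form a nonempty closed subsemigroup; by
  the Ellis--Numakura lemma it contains an idempotent, which contains \<open>A\<close>.  Conversely, for an
  idempotent \<open>p \<in> cl K\<close> containing \<open>A\<close>, take the shift on \<open>{0,1}\<^sup>\<real>\<close> with \<open>x = \<chi>\<^sub>A\<close>,
  \<open>y t \<longleftrightarrow> -t+A \<in> p\<close> and \<open>U = {f. f 0}\<close>: idempotence puts every joint return set into \<open>p\<close>, hence into a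
  member of \<open>K\<close>, so it is piecewise syndetic near zero.\<close>

lemma betaS_iff: "p \<in> betaS S \<longleftrightarrow> is_ultrafilter S p"
  unfolding betaS_def by simp

lemma ultrafilter_subset: "is_ultrafilter S p \<Longrightarrow> A \<in> p \<Longrightarrow> A \<subseteq> S"
  unfolding is_ultrafilter_def by blast

lemma ultrafilter_carrier: "is_ultrafilter S p \<Longrightarrow> S \<in> p"
  unfolding is_ultrafilter_def by blast

lemma ultrafilter_mono: "is_ultrafilter S p \<Longrightarrow> A \<in> p \<Longrightarrow> A \<subseteq> B \<Longrightarrow> B \<subseteq> S \<Longrightarrow> B \<in> p"
  unfolding is_ultrafilter_def by blast

lemma ultrafilter_Int: "is_ultrafilter S p \<Longrightarrow> A \<in> p \<Longrightarrow> B \<in> p \<Longrightarrow> A \<inter> B \<in> p"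
  unfolding is_ultrafilter_def by blast

lemma ultrafilter_nonempty: "is_ultrafilter S p \<Longrightarrow> A \<in> p \<Longrightarrow> A \<noteq> {}"
  unfolding is_ultrafilter_def by blast

lemma ultrafilter_Int_iff:
  "is_ultrafilter S p \<Longrightarrow> A \<subseteq> S \<Longrightarrow> B \<subseteq> S \<Longrightarrow> A \<inter> B \<in> p \<longleftrightarrow> A \<in> p \<and> B \<in> p"
  by (meson inf_le1 inf_le2 ultrafilter_Int ultrafilter_mono)

lemma ultrafilter_not_mem_iff:
  assumes p: "is_ultrafilter S p" and "A \<subseteq> S"
  shows "A \<notin> p \<longleftrightarrow> S - A \<in> p"
proof
  assume "S - A \<in> p"
  then show "A \<notin> p"
    using ultrafilter_Int[OF p] ultrafilter_nonempty[OF p] by (metis Diff_disjoint)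
qed (use assms in \<open>unfold is_ultrafilter_def, blast\<close>)

lemma ultrafilter_eqI:
  assumes p: "is_ultrafilter S p" and q: "is_ultrafilter S q" and "p \<subseteq> q"
  shows "p = q"
proof (intro subset_antisym subsetI)
  fix A assume "A \<in> q"
  then show "A \<in> p"
    using assms ultrafilter_not_mem_iff[OF p] ultrafilter_not_mem_iff[OF q] ultrafilter_subset[OF q] by blast
qed (use assms in blast)

lemma ultrafilter_Un:
  assumes p: "is_ultrafilter S p" and AB: "A \<union> B \<in> p"
  shows "A \<in> p \<or> B \<in> p"
proof (rule ccontr)
  assume "\<not> (A \<in> p \<or> B \<in> p)"
  moreover have "A \<subseteq> S" "B \<subseteq> S" using ultrafilter_subset[OF p AB] by auto
  ultimately have "S - A \<in> p" "S - B \<in> p" using ultrafilter_not_mem_iff[OF p] by auto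
  then have "(A \<union> B) \<inter> ((S - A) \<inter> (S - B)) \<in> p" using ultrafilter_Int[OF p] AB by blast
  then show False using ultrafilter_nonempty[OF p] by blast
qed

lemma ultrafilter_UN:
  "finite I \<Longrightarrow> is_ultrafilter S p \<Longrightarrow> (\<Union>i\<in>I. A i) \<in> p \<Longrightarrow> \<exists>i\<in>I. A i \<in> p"
proof (induction I rule: finite_induct)
  case empty
  then show ?case using ultrafilter_nonempty by auto
next
  case (insert x F)
  then show ?case using ultrafilter_Un[of S p "A x" "\<Union>i\<in>F. A i"] by auto
qed

lemma ultrafilter_INT:
  "finite I \<Longrightarrow> is_ultrafilter S p \<Longrightarrow> \<forall>i\<in>I. A i \<in> p \<Longrightarrow> S \<inter> (\<Inter>i\<in>I. A i) \<in> p"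
proof (induction I rule: finite_induct)
  case empty
  then show ?case using ultrafilter_carrier by auto
next
  case (insert x F)
  then have "A x \<inter> (S \<inter> (\<Inter>i\<in>F. A i)) \<in> p" using ultrafilter_Int by auto
  then show ?case by (simp add: Int_left_commute)
qed

lemma ultrafilter_Boolean_algebraI:
  assumes sub: "p \<subseteq> Pow S"
    and compl: "\<And>A. A \<subseteq> S \<Longrightarrow> S - A \<in> p \<longleftrightarrow> A \<notin> p"
    and inter: "\<And>A B. A \<subseteq> S \<Longrightarrow> B \<subseteq> S \<Longrightarrow> A \<inter> B \<in> p \<longleftrightarrow> A \<in> p \<and> B \<in> p"
  shows "is_ultrafilter S p"
proof -
  have mono: "B \<in> p" if "A \<in> p" "A \<subseteq> B" "B \<subseteq> S" for A B
    using inter[of A B] that sub by (auto simp: Int_absorb2)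
  have "S \<in> p"
  proof (rule ccontr)
    assume "S \<notin> p"
    then have "{} \<in> p" using compl[of S] by simp
    then show False using mono[of "{}" S] \<open>S \<notin> p\<close> by simp
  qed
  moreover have "{} \<notin> p" using compl[of S] \<open>S \<in> p\<close> by simp
  ultimately show ?thesis
    unfolding is_ultrafilter_def
  proof (intro conjI ballI allI impI)
    fix A B assume "A \<in> p" "B \<in> p"
    then show "A \<inter> B \<in> p" using inter[of A B] sub by blast
  next
    fix A B assume "A \<in> p" "A \<subseteq> B \<and> B \<subseteq> S"
    then show "B \<in> p" using mono by blast
  next
    fix A assume "A \<subseteq> S"
    then show "A \<in> p \<or> S - A \<in> p" using compl by blast
  qed (use sub in auto)
qed

definition proper_filter :: "real set \<Rightarrow> real set set \<Rightarrow> bool" where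
  "proper_filter S F \<longleftrightarrow> F \<subseteq> Pow S \<and> S \<in> F \<and> {} \<notin> F \<and>
     (\<forall>A\<in>F. \<forall>B. A \<subseteq> B \<and> B \<subseteq> S \<longrightarrow> B \<in> F) \<and> (\<forall>A\<in>F. \<forall>B\<in>F. A \<inter> B \<in> F)"

lemma proper_filterD:
  assumes "proper_filter S F"
  shows "F \<subseteq> Pow S" "S \<in> F" "{} \<notin> F" "A \<in> F \<Longrightarrow> A \<subseteq> B \<Longrightarrow> B \<subseteq> S \<Longrightarrow> B \<in> F"
    "A \<in> F \<Longrightarrow> B \<in> F \<Longrightarrow> A \<inter> B \<in> F"
  using assms unfolding proper_filter_def by blast+

lemma proper_filterI:
  assumes "F \<subseteq> Pow S" "S \<in> F" "{} \<notin> F" "\<And>A B. A \<in> F \<Longrightarrow> A \<subseteq> B \<Longrightarrow> B \<subseteq> S \<Longrightarrow> B \<in> F"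
    "\<And>A B. A \<in> F \<Longrightarrow> B \<in> F \<Longrightarrow> A \<inter> B \<in> F"
  shows "proper_filter S F"
  using assms unfolding proper_filter_def by blast

lemma proper_filter_Union_chain:
  assumes ne: "\<C> \<noteq> {}" and filters: "\<And>F. F \<in> \<C> \<Longrightarrow> proper_filter S F"
    and chain: "\<forall>F\<in>\<C>. \<forall>G\<in>\<C>. F \<subseteq> G \<or> G \<subseteq> F"
  shows "proper_filter S (\<Union>\<C>)"
  unfolding proper_filter_def
proof (intro conjI ballI allI impI)
  fix A B assume "A \<in> \<Union>\<C>" "B \<in> \<Union>\<C>"
  then obtain F G where FG: "F \<in> \<C>" "G \<in> \<C>" "A \<in> F" "B \<in> G" by blast
  with chain have "A \<in> F \<and> B \<in> F \<or> A \<in> G \<and> B \<in> G" by blast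
  then show "A \<inter> B \<in> \<Union>\<C>"
    using proper_filterD(5)[OF filters] FG by blast
next
  fix A B assume "A \<in> \<Union>\<C>" "A \<subseteq> B \<and> B \<subseteq> S"
  then show "B \<in> \<Union>\<C>" using proper_filterD(4)[OF filters] by blast
next
  obtain F where "F \<in> \<C>" using ne by blast
  then show "S \<in> \<Union>\<C>" using proper_filterD(2)[OF filters] by blast
qed (use proper_filterD(1,3)[OF filters] in blast)+

lemma maximal_proper_filter_ultrafilter:
  assumes M: "proper_filter S M" and max: "\<And>F. proper_filter S F \<Longrightarrow> M \<subseteq> F \<Longrightarrow> F = M"
  shows "is_ultrafilter S M"
proof -
  have "A \<in> M \<or> S - A \<in> M" if A: "A \<subseteq> S" for A
  proof (rule ccontr)
    assume not_in: "\<not> (A \<in> M \<or> S - A \<in> M)"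
    define M' where "M' = {B. B \<subseteq> S \<and> (\<exists>C\<in>M. C \<inter> A \<subseteq> B)}"
    have meets: "C \<inter> A \<noteq> {}" if "C \<in> M" for C
    proof
      assume "C \<inter> A = {}"
      moreover have "C \<subseteq> S" using proper_filterD(1)[OF M] that by blast
      ultimately have "S - A \<in> M" by (intro proper_filterD(4)[OF M that]) auto
      with not_in show False by blast
    qed
    have "proper_filter S M'"
    proof (rule proper_filterI)
      fix X Y assume "X \<in> M'" "Y \<in> M'"
      then obtain C D where "C \<in> M" "D \<in> M" "C \<inter> A \<subseteq> X" "D \<inter> A \<subseteq> Y" "X \<subseteq> S" "Y \<subseteq> S"
        unfolding M'_def by blast
      moreover have "C \<inter> D \<in> M" using proper_filterD(5)[OF M] calculation by blast
      ultimately show "X \<inter> Y \<in> M'" unfolding M'_def by blast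
    next
      show "{} \<notin> M'" unfolding M'_def using meets by auto
    next
      show "S \<in> M'" unfolding M'_def using proper_filterD(2)[OF M] by blast
    next
      show "M' \<subseteq> Pow S" unfolding M'_def by blast
    next
      fix X Y assume "X \<in> M'" "X \<subseteq> Y" "Y \<subseteq> S"
      then show "Y \<in> M'" unfolding M'_def by blast
    qed
    moreover have "M \<subseteq> M'" unfolding M'_def using proper_filterD(1)[OF M] by blast
    ultimately have "M' = M" by (rule max)
    moreover have "A \<in> M'" unfolding M'_def using A proper_filterD(2)[OF M] by blast
    ultimately show False using not_in by blast
  qed
  with proper_filterD[OF M] show ?thesis
    unfolding is_ultrafilter_def by blast
qed

lemma ultrafilter_exists:
  assumes base: "\<B> \<subseteq> Pow S" "\<B> \<noteq> {}" "{} \<notin> \<B>"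
    and directed: "\<forall>A\<in>\<B>. \<forall>B\<in>\<B>. \<exists>C\<in>\<B>. C \<subseteq> A \<inter> B"
  shows "\<exists>p. is_ultrafilter S p \<and> \<B> \<subseteq> p"
proof -
  define \<A> where "\<A> = {F. proper_filter S F \<and> \<B> \<subseteq> F}"
  define F0 where "F0 = {A. A \<subseteq> S \<and> (\<exists>C\<in>\<B>. C \<subseteq> A)}"
  have "proper_filter S F0"
  proof (rule proper_filterI)
    fix X Y assume "X \<in> F0" "Y \<in> F0"
    then obtain C D where CD: "C \<in> \<B>" "D \<in> \<B>" "C \<subseteq> X" "D \<subseteq> Y" "X \<subseteq> S" "Y \<subseteq> S"
      unfolding F0_def by blast
    obtain E where "E \<in> \<B>" "E \<subseteq> C \<inter> D" using directed CD(1,2) by blast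
    then have "E \<subseteq> X \<inter> Y" "X \<inter> Y \<subseteq> S" using CD by auto
    with \<open>E \<in> \<B>\<close> show "X \<inter> Y \<in> F0" unfolding F0_def by auto
  next
    show "S \<in> F0" unfolding F0_def using base(1,2) by blast
  next
    show "{} \<notin> F0" unfolding F0_def using base(3) by auto
  next
    fix X Y assume "X \<in> F0" "X \<subseteq> Y" "Y \<subseteq> S"
    then show "Y \<in> F0" unfolding F0_def by blast
  next
    show "F0 \<subseteq> Pow S" unfolding F0_def by blast
  qed
  moreover have "\<B> \<subseteq> F0" unfolding F0_def using base(1) by blast
  ultimately have "\<A> \<noteq> {}" unfolding \<A>_def by blast
  moreover have "\<Union>\<C> \<in> \<A>" if "\<C> \<noteq> {}" "subset.chain \<A> \<C>" for \<C>
  proof -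
    have "\<forall>F\<in>\<C>. proper_filter S F \<and> \<B> \<subseteq> F" "\<forall>F\<in>\<C>. \<forall>G\<in>\<C>. F \<subseteq> G \<or> G \<subseteq> F"
      using that(2) unfolding \<A>_def subset_chain_def by blast+
    moreover from this have "proper_filter S (\<Union>\<C>)"
      by (intro proper_filter_Union_chain[OF that(1)]) blast+
    ultimately show ?thesis
      unfolding \<A>_def using that(1) by blast
  qed
  ultimately obtain M where M: "M \<in> \<A>" and max: "\<forall>F\<in>\<A>. M \<subseteq> F \<longrightarrow> F = M"
    using subset_Zorn_nonempty[of \<A>] by blast
  have "proper_filter S M" "\<B> \<subseteq> M" using M unfolding \<A>_def by blast+
  moreover have "F = M" if "proper_filter S F" "M \<subseteq> F" for F
    using max that \<open>\<B> \<subseteq> M\<close> unfolding \<A>_def by blast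
  ultimately have "is_ultrafilter S M" by (intro maximal_proper_filter_ultrafilter)
  with \<open>\<B> \<subseteq> M\<close> show ?thesis by blast
qed

section \<open>Closed subsets of \<open>\<beta>S\<close>\<close>

definition beta_closed :: "real set \<Rightarrow> real set set set \<Rightarrow> bool" where
  "beta_closed S C \<longleftrightarrow> C \<subseteq> betaS S \<and> betaCl S C \<subseteq> C"

lemma betaCl_iff: "p \<in> betaCl S P \<longleftrightarrow> p \<in> betaS S \<and> (\<forall>A\<in>p. \<exists>q\<in>P. A \<in> q)"
  unfolding betaCl_def by simp

lemma betaCl_subset: "betaCl S P \<subseteq> betaS S"
  unfolding betaCl_def by auto

lemma betaCl_ultrafilter: "p \<in> betaCl S P \<Longrightarrow> is_ultrafilter S p"
  unfolding betaCl_def betaS_def by blast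

lemma betaCl_superset: "P \<subseteq> betaS S \<Longrightarrow> P \<subseteq> betaCl S P"
  unfolding betaCl_def by auto

lemma betaCl_mono: "P \<subseteq> Q \<Longrightarrow> betaCl S P \<subseteq> betaCl S Q"
  unfolding betaCl_def by blast

lemma beta_closed_betaCl: "beta_closed S (betaCl S P)"
  unfolding beta_closed_def betaCl_def by blast

lemma beta_closedD: "beta_closed S C \<Longrightarrow> p \<in> betaCl S C \<Longrightarrow> p \<in> C"
  unfolding beta_closed_def by blast

lemma beta_closed_subset: "beta_closed S C \<Longrightarrow> C \<subseteq> betaS S"
  unfolding beta_closed_def by blast

lemma beta_closed_basic: "beta_closed S {p\<in>betaS S. A \<in> p}"
  unfolding beta_closed_def
proof (intro conjI subsetI)
  fix p assume p: "p \<in> betaCl S {p\<in>betaS S. A \<in> p}"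
  then have up: "is_ultrafilter S p" by (rule betaCl_ultrafilter)
  obtain q0 where "q0 \<in> betaS S" "A \<in> q0"
    using p ultrafilter_carrier[OF up] unfolding betaCl_iff by blast
  then have AS: "A \<subseteq> S" using ultrafilter_subset by (auto simp: betaS_iff)
  have "A \<in> p"
  proof (rule ccontr)
    assume "A \<notin> p"
    then have "S - A \<in> p" using ultrafilter_not_mem_iff[OF up AS] by blast
    then obtain q where "q \<in> betaS S" "A \<in> q" "S - A \<in> q" using p unfolding betaCl_iff by blast
    then show False using ultrafilter_not_mem_iff[OF _ AS] by (auto simp: betaS_iff)
  qed
  then show "p \<in> {p\<in>betaS S. A \<in> p}" using p betaCl_subset by blast
qed auto

lemma beta_closed_Int: "beta_closed S C \<Longrightarrow> beta_closed S D \<Longrightarrow> beta_closed S (C \<inter> D)"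
  unfolding beta_closed_def using betaCl_mono[of "C \<inter> D" C S] betaCl_mono[of "C \<inter> D" D S] by blast

lemma beta_closed_Inter:
  assumes "\<C> \<noteq> {}" and "\<forall>C\<in>\<C>. beta_closed S C"
  shows "beta_closed S (\<Inter>\<C>)"
proof -
  have "betaCl S (\<Inter>\<C>) \<subseteq> C" if "C \<in> \<C>" for C
    using betaCl_mono[of "\<Inter>\<C>" C S] that assms(2) unfolding beta_closed_def by blast
  with assms show ?thesis unfolding beta_closed_def by blast
qed

lemma beta_closed_singleton: "p \<in> betaS S \<Longrightarrow> beta_closed S {p}"
  unfolding beta_closed_def
proof (intro conjI subsetI)
  fix r assume p: "p \<in> betaS S" and r: "r \<in> betaCl S {p}"
  have "r \<subseteq> p" using r unfolding betaCl_iff by blast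
  with p betaCl_ultrafilter[OF r] show "r \<in> {p}" using ultrafilter_eqI[of S r p] by (simp add: betaS_iff)
qed auto

lemma beta_closed_memI:
  assumes C: "beta_closed S C" and p: "is_ultrafilter S p"
    and common: "\<And>A. A \<subseteq> S \<Longrightarrow> \<forall>q\<in>C. A \<in> q \<Longrightarrow> A \<in> p"
  shows "p \<in> C"
proof -
  have uf: "is_ultrafilter S q" if "q \<in> C" for q
    using beta_closed_subset[OF C] that by (auto simp: betaS_iff)
  have "\<exists>q\<in>C. A \<in> q" if A: "A \<in> p" for A
  proof (rule ccontr)
    assume "\<not> (\<exists>q\<in>C. A \<in> q)"
    then have "S - A \<in> q" if "q \<in> C" for q
      using ultrafilter_not_mem_iff[OF uf[OF that] ultrafilter_subset[OF p A]] that by blast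
    then have "S - A \<in> p" using common by blast
    with A show False using ultrafilter_not_mem_iff[OF p ultrafilter_subset[OF p A]] by blast
  qed
  then have "p \<in> betaCl S C" unfolding betaCl_iff betaS_iff using p by blast
  then show ?thesis using beta_closedD[OF C] by blast
qed

text \<open>Compactness of \<open>\<beta>S\<close>, in the form of the finite intersection property for directed families.\<close>
lemma beta_closed_directed_Inter:
  assumes ne: "\<C> \<noteq> {}" and closed: "\<And>C. C \<in> \<C> \<Longrightarrow> beta_closed S C"
    and nonempty: "\<And>C. C \<in> \<C> \<Longrightarrow> C \<noteq> {}"
    and directed: "\<And>C1 C2. C1 \<in> \<C> \<Longrightarrow> C2 \<in> \<C> \<Longrightarrow> \<exists>C3\<in>\<C>. C3 \<subseteq> C1 \<inter> C2"
  shows "\<exists>p. \<forall>C\<in>\<C>. p \<in> C"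
proof -
  define \<B> where "\<B> = {A. A \<subseteq> S \<and> (\<exists>C\<in>\<C>. \<forall>q\<in>C. A \<in> q)}"
  have uf: "is_ultrafilter S q" if "q \<in> C" "C \<in> \<C>" for q C
    using beta_closed_subset[OF closed[OF that(2)]] that(1) by (auto simp: betaS_iff)
  have "\<exists>p. is_ultrafilter S p \<and> \<B> \<subseteq> p"
  proof (rule ultrafilter_exists)
    show "\<B> \<subseteq> Pow S" unfolding \<B>_def by blast
    obtain C where "C \<in> \<C>" using ne by blast
    then have "S \<in> \<B>" unfolding \<B>_def using uf ultrafilter_carrier by blast
    then show "\<B> \<noteq> {}" by blast
    show "{} \<notin> \<B>"
    proof
      assume "{} \<in> \<B>"
      then obtain C where C: "C \<in> \<C>" "\<forall>q\<in>C. {} \<in> q" unfolding \<B>_def by blast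
      obtain q where "q \<in> C" using nonempty[OF C(1)] by blast
      then show False using C uf ultrafilter_nonempty by blast
    qed
    show "\<forall>A\<in>\<B>. \<forall>B\<in>\<B>. \<exists>C\<in>\<B>. C \<subseteq> A \<inter> B"
    proof (intro ballI)
      fix A B assume "A \<in> \<B>" "B \<in> \<B>"
      then obtain C1 C2 where C: "C1 \<in> \<C>" "C2 \<in> \<C>" "\<forall>q\<in>C1. A \<in> q" "\<forall>q\<in>C2. B \<in> q" "A \<subseteq> S" "B \<subseteq> S"
        unfolding \<B>_def by blast
      obtain C3 where C3: "C3 \<in> \<C>" "C3 \<subseteq> C1 \<inter> C2" using directed[OF C(1,2)] by blast
      have "A \<inter> B \<in> q" if "q \<in> C3" for q
        using ultrafilter_Int[OF uf[OF that C3(1)]] C C3 that by blast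
      then have "A \<inter> B \<in> \<B>" unfolding \<B>_def using C(5) C3(1) by (auto intro!: bexI[of _ C3])
      then show "\<exists>C\<in>\<B>. C \<subseteq> A \<inter> B" by blast
    qed
  qed
  then obtain p where up: "is_ultrafilter S p" and Bp: "\<B> \<subseteq> p" by blast
  have "p \<in> C" if C: "C \<in> \<C>" for C
    by (rule beta_closed_memI[OF closed[OF C] up]) (use Bp C in \<open>auto simp: \<B>_def\<close>)
  then show ?thesis by blast
qed

text \<open>The image of a compact set under a continuous map is closed.\<close>
lemma beta_closed_image:
  assumes C: "beta_closed S C" and into: "\<phi> ` C \<subseteq> betaS S"
    and continuous: "\<And>A. A \<subseteq> S \<Longrightarrow> beta_closed S {c\<in>C. A \<in> \<phi> c}"
  shows "beta_closed S (\<phi> ` C)"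
proof -
  have "p \<in> \<phi> ` C" if p: "p \<in> betaCl S (\<phi> ` C)" for p
  proof -
    have up: "is_ultrafilter S p" using p by (rule betaCl_ultrafilter)
    have uf: "is_ultrafilter S (\<phi> c)" if "c \<in> C" for c
      using into that by (auto simp: betaS_iff)
    define preimage where "preimage A = {c\<in>C. A \<in> \<phi> c}" for A
    have "\<exists>c. \<forall>X\<in>preimage ` p. c \<in> X"
    proof (rule beta_closed_directed_Inter)
      show "preimage ` p \<noteq> {}" using ultrafilter_carrier[OF up] by blast
    next
      fix X assume "X \<in> preimage ` p"
      then obtain A where A: "A \<in> p" "X = preimage A" by blast
      show "beta_closed S X"
        unfolding A(2) preimage_def by (rule continuous[OF ultrafilter_subset[OF up A(1)]])
      show "X \<noteq> {}" using p A unfolding preimage_def betaCl_iff by blast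
    next
      fix X Y assume "X \<in> preimage ` p" "Y \<in> preimage ` p"
      then obtain A B where AB: "A \<in> p" "B \<in> p" "X = preimage A" "Y = preimage B" by blast
      have "preimage (A \<inter> B) \<subseteq> X \<inter> Y"
        unfolding AB(3,4) preimage_def
        using ultrafilter_Int_iff[OF uf ultrafilter_subset[OF up AB(1)] ultrafilter_subset[OF up AB(2)]]
        by auto
      moreover have "A \<inter> B \<in> p" using ultrafilter_Int[OF up AB(1,2)] .
      ultimately show "\<exists>Z\<in>preimage ` p. Z \<subseteq> X \<inter> Y" by blast
    qed
    then obtain c where "\<forall>X\<in>preimage ` p. c \<in> X" by blast
    then have c: "c \<in> C \<and> A \<in> \<phi> c" if "A \<in> p" for A
      using that unfolding preimage_def by auto
    then have "c \<in> C" using ultrafilter_carrier[OF up] by blast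
    moreover have "p = \<phi> c"
      using c \<open>c \<in> C\<close> by (intro ultrafilter_eqI[OF up uf]) auto
    ultimately show ?thesis by blast
  qed
  with C into show ?thesis unfolding beta_closed_def by blast
qed

lemma Zorn_minimal_Inter:
  assumes "\<F> \<noteq> {}"
    and chain: "\<And>\<C>. \<C> \<subseteq> \<F> \<Longrightarrow> \<C> \<noteq> {} \<Longrightarrow> \<forall>X\<in>\<C>. \<forall>Y\<in>\<C>. X \<subseteq> Y \<or> Y \<subseteq> X \<Longrightarrow> \<Inter>\<C> \<in> \<F>"
  shows "\<exists>M\<in>\<F>. \<forall>X\<in>\<F>. X \<subseteq> M \<longrightarrow> X = M"
proof -
  have "\<exists>M\<in>uminus ` \<F>. \<forall>X\<in>uminus ` \<F>. M \<subseteq> X \<longrightarrow> X = M"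
  proof (rule subset_Zorn_nonempty)
    fix \<C> assume "\<C> \<noteq> {}" "subset.chain (uminus ` \<F>) \<C>"
    then have "\<Inter>(uminus ` \<C>) \<in> \<F>"
      by (intro chain) (auto simp: subset_chain_def)
    moreover have "\<Union>\<C> = - \<Inter>(uminus ` \<C>)" by auto
    ultimately show "\<Union>\<C> \<in> uminus ` \<F>" by (metis image_eqI)
  qed (use assms(1) in blast)
  then obtain M where "M \<in> \<F>" "\<forall>X\<in>\<F>. - M \<subseteq> - X \<longrightarrow> X = M" by auto
  then show ?thesis by auto
qed

lemma beta_closed_minimal_exists:
  assumes "P M" "beta_closed S M" "M \<noteq> {}"
    and Inter: "\<And>\<C>. \<C> \<noteq> {} \<Longrightarrow> \<forall>C\<in>\<C>. P C \<and> beta_closed S C \<and> C \<noteq> {} \<Longrightarrow>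
                   \<forall>X\<in>\<C>. \<forall>Y\<in>\<C>. X \<subseteq> Y \<or> Y \<subseteq> X \<Longrightarrow> P (\<Inter>\<C>)"
  shows "\<exists>N. P N \<and> beta_closed S N \<and> N \<noteq> {} \<and>
             (\<forall>N'. P N' \<and> beta_closed S N' \<and> N' \<noteq> {} \<and> N' \<subseteq> N \<longrightarrow> N' = N)"
proof -
  define \<F> where "\<F> = {N. P N \<and> beta_closed S N \<and> N \<noteq> {}}"
  have "\<exists>N\<in>\<F>. \<forall>X\<in>\<F>. X \<subseteq> N \<longrightarrow> X = N"
  proof (rule Zorn_minimal_Inter)
    show "\<F> \<noteq> {}" unfolding \<F>_def using assms(1-3) by blast
  next
    fix \<C> assume sub: "\<C> \<subseteq> \<F>" and ne: "\<C> \<noteq> {}"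
      and chain: "\<forall>X\<in>\<C>. \<forall>Y\<in>\<C>. X \<subseteq> Y \<or> Y \<subseteq> X"
    have members: "\<forall>C\<in>\<C>. P C \<and> beta_closed S C \<and> C \<noteq> {}" using sub unfolding \<F>_def by blast
    have "\<exists>p. \<forall>C\<in>\<C>. p \<in> C"
    proof (rule beta_closed_directed_Inter[OF ne])
      fix C1 C2 assume "C1 \<in> \<C>" "C2 \<in> \<C>"
      with chain have "C1 \<subseteq> C2 \<or> C2 \<subseteq> C1" by blast
      with \<open>C1 \<in> \<C>\<close> \<open>C2 \<in> \<C>\<close> show "\<exists>C3\<in>\<C>. C3 \<subseteq> C1 \<inter> C2" by auto
    qed (use members in blast)+
    then have "\<Inter>\<C> \<noteq> {}" by blast
    moreover have "beta_closed S (\<Inter>\<C>)" using beta_closed_Inter[OF ne] members by blast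
    moreover have "P (\<Inter>\<C>)" using Inter[OF ne members chain] .
    ultimately show "\<Inter>\<C> \<in> \<F>" unfolding \<F>_def by blast
  qed
  then show ?thesis unfolding \<F>_def by blast
qed

section \<open>The semigroup \<open>(\<beta>S, +)\<close> and its subsemigroup \<open>O\<^sup>+(S)\<close>\<close>

lemma lshift_subset: "lshift S x A \<subseteq> S"
  unfolding lshift_def by auto

lemma lshift_Int: "lshift S x (A \<inter> B) = lshift S x A \<inter> lshift S x B"
  unfolding lshift_def by auto

lemma Oplus_subset_betaS: "Oplus S \<subseteq> betaS S"
  unfolding Oplus_def by auto

lemma Oplus_iff: "p \<in> Oplus S \<longleftrightarrow> p \<in> betaS S \<and> (\<forall>e>0. S \<inter> {0<..<e} \<in> p)"
  unfolding Oplus_def by auto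

lemma beta_closed_Oplus: "beta_closed S (Oplus S)"
  unfolding beta_closed_def
proof (intro conjI subsetI)
  fix p assume p: "p \<in> betaCl S (Oplus S)"
  then have up: "is_ultrafilter S p" by (rule betaCl_ultrafilter)
  have "S \<inter> {0<..<e} \<in> p" if e: "e > 0" for e
  proof (rule ccontr)
    assume "S \<inter> {0<..<e} \<notin> p"
    then have "S - (S \<inter> {0<..<e}) \<in> p" using ultrafilter_not_mem_iff[OF up] by blast
    then obtain q where q: "q \<in> Oplus S" "S - (S \<inter> {0<..<e}) \<in> q" using p unfolding betaCl_iff by blast
    then have "is_ultrafilter S q" "S \<inter> {0<..<e} \<in> q" using e by (auto simp: Oplus_iff betaS_iff)
    with q(2) show False using ultrafilter_not_mem_iff by blast
  qed
  then show "p \<in> Oplus S" using p betaCl_subset unfolding Oplus_iff by blast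
qed (use Oplus_subset_betaS in blast)

locale dense_semigroup =
  fixes S :: "real set"
  assumes dense: "dense_subsemigroup S"
begin

abbreviation plus_beta (infixl "\<oplus>" 65) where "p \<oplus> q \<equiv> uplus S p q"

lemma S_pos: "s \<in> S \<Longrightarrow> 0 < s"
  using dense unfolding dense_subsemigroup_def by auto

lemma S_add: "s \<in> S \<Longrightarrow> t \<in> S \<Longrightarrow> s + t \<in> S"
  using dense unfolding dense_subsemigroup_def by auto

lemma S_meets_near_zero:
  assumes "0 < e"
  shows "S \<inter> {0<..<e} \<noteq> {}"
proof -
  have "\<forall>a b. 0 < a \<and> a < b \<longrightarrow> (\<exists>s\<in>S. a < s \<and> s < b)"
    using dense unfolding dense_subsemigroup_def by blast
  from this[rule_format, of "e/2" e] assms show ?thesis by auto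
qed

lemma lshift_Diff: "x \<in> S \<Longrightarrow> lshift S x (S - A) = S - lshift S x A"
  unfolding lshift_def using S_add by auto

lemma lshift_lshift: "y \<in> S \<Longrightarrow> z \<in> S \<Longrightarrow> lshift S z (lshift S y A) = lshift S (y + z) A"
  unfolding lshift_def using S_add by (auto simp: add.assoc)

lemma uplus_betaS:
  assumes p: "p \<in> betaS S" and q: "q \<in> betaS S"
  shows "p \<oplus> q \<in> betaS S"
proof -
  have up: "is_ultrafilter S p" and uq: "is_ultrafilter S q" using p q by (auto simp: betaS_iff)
  define E where "E A = {x\<in>S. lshift S x A \<in> q}" for A
  have mem: "A \<in> p \<oplus> q \<longleftrightarrow> A \<subseteq> S \<and> E A \<in> p" for A
    unfolding uplus_def E_def by simp
  have E_subset: "E A \<subseteq> S" for A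
    unfolding E_def by blast
  have E_Diff: "E (S - A) = S - E A" for A
  proof -
    have "lshift S x (S - A) \<in> q \<longleftrightarrow> lshift S x A \<notin> q" if "x \<in> S" for x
      using lshift_Diff[OF that] ultrafilter_not_mem_iff[OF uq lshift_subset] by simp
    then show ?thesis unfolding E_def by auto
  qed
  have E_Int: "E (A \<inter> B) = E A \<inter> E B" for A B
    unfolding E_def lshift_Int using ultrafilter_Int_iff[OF uq lshift_subset lshift_subset] by auto
  have "is_ultrafilter S (p \<oplus> q)"
  proof (rule ultrafilter_Boolean_algebraI)
    show "p \<oplus> q \<subseteq> Pow S" unfolding uplus_def by blast
  next
    fix A assume "A \<subseteq> S"
    then show "S - A \<in> p \<oplus> q \<longleftrightarrow> A \<notin> p \<oplus> q"
      by (simp add: mem E_Diff ultrafilter_not_mem_iff[OF up E_subset])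
  next
    fix A B assume "A \<subseteq> S" "B \<subseteq> S"
    then show "A \<inter> B \<in> p \<oplus> q \<longleftrightarrow> A \<in> p \<oplus> q \<and> B \<in> p \<oplus> q"
      by (auto simp add: mem E_Int ultrafilter_Int_iff[OF up E_subset E_subset])
  qed
  then show ?thesis by (simp add: betaS_iff)
qed

lemma uplus_assoc: "(p \<oplus> q) \<oplus> r = p \<oplus> (q \<oplus> r)"
proof -
  have "A \<in> (p \<oplus> q) \<oplus> r \<longleftrightarrow> A \<in> p \<oplus> (q \<oplus> r)" for A
  proof -
    have e1: "lshift S y {x\<in>S. lshift S x A \<in> r} = {z\<in>S. lshift S (y + z) A \<in> r}" if "y \<in> S" for y
      unfolding lshift_def using S_add that by auto
    have e2: "lshift S y A \<in> q \<oplus> r \<longleftrightarrow> {z\<in>S. lshift S (y + z) A \<in> r} \<in> q" if "y \<in> S" for y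
    proof -
      have "{z\<in>S. lshift S z (lshift S y A) \<in> r} = {z\<in>S. lshift S (y + z) A \<in> r}"
        using lshift_lshift[OF that] by auto
      then show ?thesis unfolding uplus_def using lshift_subset by auto
    qed
    have "A \<in> (p \<oplus> q) \<oplus> r \<longleftrightarrow> A \<subseteq> S \<and> {y\<in>S. {z\<in>S. lshift S (y + z) A \<in> r} \<in> q} \<in> p"
    proof -
      have "{y\<in>S. lshift S y {x\<in>S. lshift S x A \<in> r} \<in> q} = {y\<in>S. {z\<in>S. lshift S (y + z) A \<in> r} \<in> q}"
        using e1 by auto
      then show ?thesis unfolding uplus_def by auto
    qed
    moreover have "A \<in> p \<oplus> (q \<oplus> r) \<longleftrightarrow> A \<subseteq> S \<and> {y\<in>S. {z\<in>S. lshift S (y + z) A \<in> r} \<in> q} \<in> p"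
    proof -
      have "{y\<in>S. lshift S y A \<in> q \<oplus> r} = {y\<in>S. {z\<in>S. lshift S (y + z) A \<in> r} \<in> q}"
        using e2 by auto
      then show ?thesis unfolding uplus_def by auto
    qed
    ultimately show ?thesis by simp
  qed
  then show ?thesis by blast
qed

lemma uplus_betaCl_right:
  assumes p: "p \<in> betaCl S C" and q: "q \<in> betaS S"
  shows "p \<oplus> q \<in> betaCl S ((\<lambda>c. c \<oplus> q) ` C)"
  unfolding betaCl_iff
proof (intro conjI ballI)
  show "p \<oplus> q \<in> betaS S" using uplus_betaS[OF _ q] p betaCl_subset by blast
  fix A assume "A \<in> p \<oplus> q"
  then have A: "A \<subseteq> S" "{x\<in>S. lshift S x A \<in> q} \<in> p" unfolding uplus_def by auto
  then obtain c where c: "c \<in> C" "{x\<in>S. lshift S x A \<in> q} \<in> c" using p unfolding betaCl_iff by blast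
  then have "A \<in> c \<oplus> q" using A(1) unfolding uplus_def by simp
  with c(1) show "\<exists>d\<in>(\<lambda>c. c \<oplus> q) ` C. A \<in> d" by blast
qed

lemma beta_closed_uplus_right_image:
  assumes C: "beta_closed S C" and q: "q \<in> betaS S"
  shows "beta_closed S ((\<lambda>c. c \<oplus> q) ` C)"
proof (rule beta_closed_image[OF C])
  show "(\<lambda>c. c \<oplus> q) ` C \<subseteq> betaS S" using uplus_betaS[OF _ q] beta_closed_subset[OF C] by blast
  fix A assume "A \<subseteq> S"
  then have "{c\<in>C. A \<in> c \<oplus> q} = C \<inter> {c\<in>betaS S. {x\<in>S. lshift S x A \<in> q} \<in> c}"
    unfolding uplus_def using beta_closed_subset[OF C] by auto
  then show "beta_closed S {c\<in>C. A \<in> c \<oplus> q}" using beta_closed_Int[OF C beta_closed_basic] by simp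
qed

lemma Oplus_uplus:
  assumes p: "p \<in> Oplus S" and q: "q \<in> Oplus S"
  shows "p \<oplus> q \<in> Oplus S"
proof -
  have up: "is_ultrafilter S p" and uq: "is_ultrafilter S q" using p q by (auto simp: Oplus_iff betaS_iff)
  have "S \<inter> {0<..<e} \<in> p \<oplus> q" if e: "e > 0" for e
  proof -
    have "lshift S x (S \<inter> {0<..<e}) \<in> q" if x: "x \<in> S \<inter> {0<..<e/2}" for x
    proof -
      have "S \<inter> {0<..<e/2} \<subseteq> lshift S x (S \<inter> {0<..<e})"
        unfolding lshift_def using x S_add S_pos by auto
      moreover have "S \<inter> {0<..<e/2} \<in> q" using q e unfolding Oplus_iff by auto
      ultimately show ?thesis using ultrafilter_mono[OF uq _ _ lshift_subset] by blast
    qed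
    then have "S \<inter> {0<..<e/2} \<subseteq> {x\<in>S. lshift S x (S \<inter> {0<..<e}) \<in> q}" by blast
    moreover have "S \<inter> {0<..<e/2} \<in> p" using p e unfolding Oplus_iff by auto
    ultimately have "{x\<in>S. lshift S x (S \<inter> {0<..<e}) \<in> q} \<in> p"
      using ultrafilter_mono[OF up, of "S \<inter> {0<..<e/2}"] by blast
    then show ?thesis unfolding uplus_def by auto
  qed
  then show ?thesis using uplus_betaS p q Oplus_subset_betaS unfolding Oplus_iff by blast
qed

lemma Oplus_exists_mem:
  assumes "E \<subseteq> S" and "\<forall>e>0. E \<inter> {0<..<e} \<noteq> {}"
  shows "\<exists>p\<in>Oplus S. E \<in> p"
proof -
  define \<B> where "\<B> = {E \<inter> {0<..<e} | e. e > 0}"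
  have "\<exists>p. is_ultrafilter S p \<and> \<B> \<subseteq> p"
  proof (rule ultrafilter_exists)
    show "\<B> \<subseteq> Pow S" unfolding \<B>_def using assms(1) by auto
    show "\<B> \<noteq> {}" unfolding \<B>_def by (auto intro: exI[of _ 1])
    show "{} \<notin> \<B>" unfolding \<B>_def using assms(2) by auto
    show "\<forall>A\<in>\<B>. \<forall>B\<in>\<B>. \<exists>C\<in>\<B>. C \<subseteq> A \<inter> B"
    proof (intro ballI)
      fix A B assume "A \<in> \<B>" "B \<in> \<B>"
      then obtain a b where "a > 0" "b > 0" "A = E \<inter> {0<..<a}" "B = E \<inter> {0<..<b}" unfolding \<B>_def by auto
      then show "\<exists>C\<in>\<B>. C \<subseteq> A \<inter> B" unfolding \<B>_def
        by (intro bexI[of _ "E \<inter> {0<..<min a b}"]) auto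
    qed
  qed
  then obtain p where up: "is_ultrafilter S p" and Bp: "\<B> \<subseteq> p" by blast
  have "S \<inter> {0<..<e} \<in> p" if "e > 0" for e
  proof -
    have "E \<inter> {0<..<e} \<in> \<B>" unfolding \<B>_def using that by blast
    then have "E \<inter> {0<..<e} \<in> p" using Bp by blast
    then show ?thesis using ultrafilter_mono[OF up, of "E \<inter> {0<..<e}"] assms(1) by blast
  qed
  moreover have "E \<in> p"
  proof -
    have "E \<inter> {0<..<1} \<in> \<B>" unfolding \<B>_def by force
    then have "E \<inter> {0<..<1} \<in> p" using Bp by auto
    then show ?thesis using ultrafilter_mono[OF up, of "E \<inter> {0<..<1}" E] assms(1) by blast
  qed
  ultimately have "p \<in> Oplus S" "E \<in> p" unfolding Oplus_iff betaS_iff using up by auto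
  then show ?thesis by blast
qed

lemma Oplus_nonempty: "Oplus S \<noteq> {}"
  using Oplus_exists_mem[of S] S_meets_near_zero by auto

lemma Oplus_betaS: "p \<in> Oplus S \<Longrightarrow> p \<in> betaS S"
  using Oplus_subset_betaS by blast

end

section \<open>Minimal left ideals and the smallest ideal of \<open>O\<^sup>+(S)\<close>\<close>

definition left_ideal :: "real set \<Rightarrow> real set set set \<Rightarrow> bool" where
  "left_ideal S L \<longleftrightarrow> L \<noteq> {} \<and> L \<subseteq> Oplus S \<and> (\<forall>p\<in>Oplus S. \<forall>l\<in>L. uplus S p l \<in> L)"

definition minimal_left_ideal :: "real set \<Rightarrow> real set set set \<Rightarrow> bool" where
  "minimal_left_ideal S L \<longleftrightarrow> left_ideal S L \<and> (\<forall>L'. left_ideal S L' \<and> L' \<subseteq> L \<longrightarrow> L' = L)"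

lemma left_idealD:
  assumes "left_ideal S L"
  shows "L \<noteq> {}" "L \<subseteq> Oplus S" "p \<in> Oplus S \<Longrightarrow> l \<in> L \<Longrightarrow> uplus S p l \<in> L"
  using assms unfolding left_ideal_def by blast+

lemma minimal_left_idealD: "minimal_left_ideal S L \<Longrightarrow> left_ideal S L"
  unfolding minimal_left_ideal_def by blast

context dense_semigroup begin

abbreviation K where "K \<equiv> Kideal S (Oplus S)"

abbreviation principal_left_ideal :: "real set set \<Rightarrow> real set set set" where
  "principal_left_ideal r \<equiv> (\<lambda>w. w \<oplus> r) ` Oplus S"

lemma left_ideal_principal: "r \<in> Oplus S \<Longrightarrow> left_ideal S (principal_left_ideal r)"
  unfolding left_ideal_def
proof (intro conjI ballI)
  assume r: "r \<in> Oplus S"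
  show "principal_left_ideal r \<noteq> {}" using Oplus_nonempty by blast
  show "principal_left_ideal r \<subseteq> Oplus S" using Oplus_uplus r by blast
  fix p l assume p: "p \<in> Oplus S" and "l \<in> principal_left_ideal r"
  then obtain w where w: "w \<in> Oplus S" "l = w \<oplus> r" by blast
  have "p \<oplus> l = (p \<oplus> w) \<oplus> r" using w by (simp add: uplus_assoc)
  moreover have "p \<oplus> w \<in> Oplus S" using Oplus_uplus[OF p w(1)] .
  ultimately show "p \<oplus> l \<in> principal_left_ideal r" by blast
qed

lemma beta_closed_principal_left_ideal: "r \<in> Oplus S \<Longrightarrow> beta_closed S (principal_left_ideal r)"
  using beta_closed_uplus_right_image[OF beta_closed_Oplus Oplus_betaS] by blast

lemma principal_left_ideal_subset: "left_ideal S L \<Longrightarrow> r \<in> L \<Longrightarrow> principal_left_ideal r \<subseteq> L"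
  using left_idealD(3) by blast

lemma minimal_left_ideal_eq_principal:
  assumes L: "minimal_left_ideal S L" and r: "r \<in> L"
  shows "principal_left_ideal r = L"
proof -
  have "r \<in> Oplus S" using r left_idealD(2)[OF minimal_left_idealD[OF L]] by blast
  then show ?thesis
    using L left_ideal_principal principal_left_ideal_subset[OF minimal_left_idealD[OF L] r]
    unfolding minimal_left_ideal_def by blast
qed

text \<open>A closed minimal left-invariant set is a minimal left ideal, because it contains the
  closed principal left ideal of each of its elements.\<close>
lemma minimal_left_ideal_exists: "\<exists>L. minimal_left_ideal S L"
proof -
  define P where "P L \<longleftrightarrow> L \<subseteq> Oplus S \<and> (\<forall>p\<in>Oplus S. \<forall>l\<in>L. p \<oplus> l \<in> L)" for L
  have P_left_ideal: "P L" if "left_ideal S L" for L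
    using that unfolding P_def left_ideal_def by blast
  have "\<exists>M. P M \<and> beta_closed S M \<and> M \<noteq> {} \<and>
          (\<forall>N. P N \<and> beta_closed S N \<and> N \<noteq> {} \<and> N \<subseteq> M \<longrightarrow> N = M)"
  proof (rule beta_closed_minimal_exists)
    show "P (Oplus S)" unfolding P_def using Oplus_uplus by blast
    show "P (\<Inter>\<C>)" if "\<C> \<noteq> {}" "\<forall>C\<in>\<C>. P C \<and> beta_closed S C \<and> C \<noteq> {}" for \<C>
      using that unfolding P_def by blast
  qed (use beta_closed_Oplus Oplus_nonempty in auto)
  then obtain M where M: "P M" "M \<noteq> {}"
    and min: "\<forall>N. P N \<and> beta_closed S N \<and> N \<noteq> {} \<and> N \<subseteq> M \<longrightarrow> N = M"
    by blast
  have "L' = M" if L': "left_ideal S L'" "L' \<subseteq> M" for L'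
  proof -
    obtain r where r: "r \<in> L'" using left_idealD(1)[OF L'(1)] by blast
    then have "r \<in> Oplus S" using left_idealD(2)[OF L'(1)] by blast
    then have "P (principal_left_ideal r)" "beta_closed S (principal_left_ideal r)"
      "principal_left_ideal r \<noteq> {}"
      using P_left_ideal[OF left_ideal_principal] beta_closed_principal_left_ideal Oplus_nonempty
      by blast+
    moreover have sub: "principal_left_ideal r \<subseteq> L'"
      using principal_left_ideal_subset[OF L'(1) r] .
    ultimately have "principal_left_ideal r = M" using min L'(2) by blast
    then show ?thesis using sub L'(2) by blast
  qed
  moreover have "left_ideal S M" using M unfolding P_def left_ideal_def by blast
  ultimately show ?thesis unfolding minimal_left_ideal_def by blast
qed

lemma minimal_left_ideal_right_shift:
  assumes L: "minimal_left_ideal S L" and b: "b \<in> Oplus S"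
  shows "minimal_left_ideal S ((\<lambda>l. l \<oplus> b) ` L)"
proof -
  have li: "left_ideal S L" using L by (rule minimal_left_idealD)
  have LO: "L \<subseteq> Oplus S" using left_idealD(2)[OF li] .
  have "left_ideal S ((\<lambda>l. l \<oplus> b) ` L)" unfolding left_ideal_def
  proof (intro conjI ballI)
    show "(\<lambda>l. l \<oplus> b) ` L \<noteq> {}" using left_idealD(1)[OF li] by blast
    show "(\<lambda>l. l \<oplus> b) ` L \<subseteq> Oplus S" using LO Oplus_uplus b by blast
    fix p x assume p: "p \<in> Oplus S" and x: "x \<in> (\<lambda>l. l \<oplus> b) ` L"
    then obtain l where l: "l \<in> L" "x = l \<oplus> b" by blast
    have "p \<oplus> x = (p \<oplus> l) \<oplus> b" using l by (simp add: uplus_assoc)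
    moreover have "p \<oplus> l \<in> L" using left_idealD(3)[OF li p l(1)] .
    ultimately show "p \<oplus> x \<in> (\<lambda>l. l \<oplus> b) ` L" by blast
  qed
  moreover have "L' = (\<lambda>l. l \<oplus> b) ` L" if L': "left_ideal S L'" "L' \<subseteq> (\<lambda>l. l \<oplus> b) ` L" for L'
  proof -
    define M0 where "M0 = {c\<in>L. c \<oplus> b \<in> L'}"
    obtain x where x: "x \<in> L'" using left_idealD(1)[OF L'(1)] by blast
    then obtain c where c: "c \<in> L" "x = c \<oplus> b" using L'(2) by blast
    have "left_ideal S M0" unfolding left_ideal_def
    proof (intro conjI ballI)
      show "M0 \<noteq> {}" unfolding M0_def using c x by blast
      show "M0 \<subseteq> Oplus S" unfolding M0_def using LO by blast
      fix p d assume p: "p \<in> Oplus S" and d: "d \<in> M0"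
      then have dL: "d \<in> L" and dL': "d \<oplus> b \<in> L'" unfolding M0_def by auto
      have "(p \<oplus> d) \<oplus> b \<in> L'" using left_idealD(3)[OF L'(1) p dL'] by (simp add: uplus_assoc)
      then show "p \<oplus> d \<in> M0" unfolding M0_def using left_idealD(3)[OF li p dL] by blast
    qed
    moreover have "M0 \<subseteq> L" unfolding M0_def by blast
    ultimately have "M0 = L" using L unfolding minimal_left_ideal_def by blast
    then have "(\<lambda>l. l \<oplus> b) ` L \<subseteq> L'" unfolding M0_def by blast
    then show ?thesis using L'(2) by blast
  qed
  ultimately show ?thesis unfolding minimal_left_ideal_def by blast
qed

lemma minimal_left_ideal_subset_ideal:
  assumes L: "minimal_left_ideal S L" and I: "is_ideal S (Oplus S) I"
  shows "L \<subseteq> I"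
proof -
  have li: "left_ideal S L" using L by (rule minimal_left_idealD)
  obtain i where i: "i \<in> I" using I unfolding is_ideal_def by blast
  have iO: "i \<in> Oplus S" using i I unfolding is_ideal_def by blast
  obtain l where l: "l \<in> L" using left_idealD(1)[OF li] by blast
  have lO: "l \<in> Oplus S" using l left_idealD(2)[OF li] by blast
  have "i \<oplus> l \<in> L" using left_idealD(3)[OF li iO l] .
  moreover have "i \<oplus> l \<in> I" using I i lO unfolding is_ideal_def by blast
  ultimately have ne: "L \<inter> I \<noteq> {}" by blast
  have "left_ideal S (L \<inter> I)" unfolding left_ideal_def
  proof (intro conjI ballI)
    show "L \<inter> I \<noteq> {}" using ne .
    show "L \<inter> I \<subseteq> Oplus S" using left_idealD(2)[OF li] by blast
    fix p x assume p: "p \<in> Oplus S" and x: "x \<in> L \<inter> I"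
    have "p \<oplus> x \<in> L" using left_idealD(3)[OF li p] x by blast
    moreover have "p \<oplus> x \<in> I" using I p x unfolding is_ideal_def by blast
    ultimately show "p \<oplus> x \<in> L \<inter> I" by blast
  qed
  then have "L \<inter> I = L" using L unfolding minimal_left_ideal_def by blast
  then show ?thesis by blast
qed

lemma is_ideal_Oplus: "is_ideal S (Oplus S) (Oplus S)"
  unfolding is_ideal_def using Oplus_nonempty Oplus_uplus by blast

lemma Kideal_subset_Oplus: "K \<subseteq> Oplus S"
  unfolding Kideal_def using is_ideal_Oplus by blast

lemma minimal_left_ideal_subset_Kideal: "minimal_left_ideal S L \<Longrightarrow> L \<subseteq> K"
  unfolding Kideal_def using minimal_left_ideal_subset_ideal by blast

lemma Kideal_nonempty: "K \<noteq> {}"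
proof -
  obtain L where "minimal_left_ideal S L" using minimal_left_ideal_exists by blast
  then show ?thesis
    using minimal_left_ideal_subset_Kideal left_idealD(1)[OF minimal_left_idealD] by blast
qed

lemma Kideal_uplus_left: "p \<in> Oplus S \<Longrightarrow> q \<in> K \<Longrightarrow> p \<oplus> q \<in> K"
  unfolding Kideal_def is_ideal_def by blast

lemma Kideal_uplus_right: "p \<in> Oplus S \<Longrightarrow> q \<in> K \<Longrightarrow> q \<oplus> p \<in> K"
  unfolding Kideal_def is_ideal_def by blast

lemma Kideal_Oplus: "q \<in> K \<Longrightarrow> q \<in> Oplus S"
  using Kideal_subset_Oplus by blast

lemma is_ideal_left_ideal_uplus_Oplus:
  assumes L: "left_ideal S L"
  shows "is_ideal S (Oplus S) {a \<oplus> b |a b. a \<in> L \<and> b \<in> Oplus S}"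
  unfolding is_ideal_def
proof (intro conjI ballI)
  obtain a b where "a \<in> L" "b \<in> Oplus S" using left_idealD(1)[OF L] Oplus_nonempty by blast
  then show "{a \<oplus> b |a b. a \<in> L \<and> b \<in> Oplus S} \<noteq> {}" by blast
  show "{a \<oplus> b |a b. a \<in> L \<and> b \<in> Oplus S} \<subseteq> Oplus S"
    using left_idealD(2)[OF L] Oplus_uplus by blast
  fix p x assume p: "p \<in> Oplus S" and "x \<in> {a \<oplus> b |a b. a \<in> L \<and> b \<in> Oplus S}"
  then obtain a b where ab: "a \<in> L" "b \<in> Oplus S" "x = a \<oplus> b" by blast
  have "p \<oplus> x = (p \<oplus> a) \<oplus> b" "p \<oplus> a \<in> L"
    using ab left_idealD(3)[OF L p ab(1)] by (simp_all add: uplus_assoc)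
  with ab(2) show "p \<oplus> x \<in> {a \<oplus> b |a b. a \<in> L \<and> b \<in> Oplus S}" by blast
  have "x \<oplus> p = a \<oplus> (b \<oplus> p)" "b \<oplus> p \<in> Oplus S"
    using ab Oplus_uplus[OF ab(2) p] by (simp_all add: uplus_assoc)
  with ab(1) show "x \<oplus> p \<in> {a \<oplus> b |a b. a \<in> L \<and> b \<in> Oplus S}" by blast
qed

lemma Kideal_mem_minimal_left_ideal:
  assumes q: "q \<in> K"
  obtains L where "minimal_left_ideal S L" "q \<in> L"
proof -
  obtain L0 where L0: "minimal_left_ideal S L0" using minimal_left_ideal_exists by blast
  then have "q \<in> {a \<oplus> b |a b. a \<in> L0 \<and> b \<in> Oplus S}"
    using q is_ideal_left_ideal_uplus_Oplus[OF minimal_left_idealD] unfolding Kideal_def by blast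
  then obtain a b where "a \<in> L0" "b \<in> Oplus S" "q = a \<oplus> b" by blast
  then show thesis using that[OF minimal_left_ideal_right_shift[OF L0]] by blast
qed

lemma Kideal_mem_principal: "q \<in> K \<Longrightarrow> q \<in> principal_left_ideal q"
  using Kideal_mem_minimal_left_ideal minimal_left_ideal_eq_principal by metis

lemma Kideal_principal_return:
  assumes q: "q \<in> K" and r: "r \<in> principal_left_ideal q"
  shows "\<exists>w\<in>Oplus S. w \<oplus> r = q"
proof -
  obtain L where L: "minimal_left_ideal S L" "q \<in> L" using Kideal_mem_minimal_left_ideal[OF q] .
  then have "r \<in> L" using r minimal_left_ideal_eq_principal by blast
  then have "q \<in> principal_left_ideal r" using L minimal_left_ideal_eq_principal by blast
  then show ?thesis by blast
qed

end

section \<open>Idempotents in closed subsemigroups\<close>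

definition uplus_closed :: "real set \<Rightarrow> real set set set \<Rightarrow> bool" where
  "uplus_closed S N \<longleftrightarrow> (\<forall>p\<in>N. \<forall>q\<in>N. uplus S p q \<in> N)"

context dense_semigroup begin

lemma beta_closed_right_fiber:
  assumes N: "beta_closed S N" and p: "p \<in> betaS S"
  shows "beta_closed S {q\<in>N. q \<oplus> p = p}"
  unfolding beta_closed_def
proof (intro conjI subsetI)
  show "x \<in> betaS S" if "x \<in> {q\<in>N. q \<oplus> p = p}" for x
    using that beta_closed_subset[OF N] by blast
  fix x assume x: "x \<in> betaCl S {q\<in>N. q \<oplus> p = p}"
  have "x \<in> N" using beta_closedD[OF N] betaCl_mono[of "{q\<in>N. q \<oplus> p = p}" N S] x by blast
  moreover have "x \<oplus> p \<in> betaCl S ((\<lambda>c. c \<oplus> p) ` {q\<in>N. q \<oplus> p = p})"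
    using uplus_betaCl_right[OF x p] .
  moreover have "(\<lambda>c. c \<oplus> p) ` {q\<in>N. q \<oplus> p = p} \<subseteq> {p}" by blast
  ultimately show "x \<in> {q\<in>N. q \<oplus> p = p}"
    using betaCl_mono beta_closedD[OF beta_closed_singleton[OF p]] by blast
qed

lemma uplus_closed_right_image:
  assumes N: "uplus_closed S N" and p: "p \<in> N"
  shows "uplus_closed S ((\<lambda>c. c \<oplus> p) ` N)"
  unfolding uplus_closed_def
proof (intro ballI)
  fix x y assume "x \<in> (\<lambda>c. c \<oplus> p) ` N" "y \<in> (\<lambda>c. c \<oplus> p) ` N"
  then obtain a b where ab: "a \<in> N" "b \<in> N" "x = a \<oplus> p" "y = b \<oplus> p" by blast
  then have "x \<oplus> y = ((a \<oplus> p) \<oplus> b) \<oplus> p" by (simp add: uplus_assoc)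
  moreover have "(a \<oplus> p) \<oplus> b \<in> N" using N ab(1,2) p unfolding uplus_closed_def by blast
  ultimately show "x \<oplus> y \<in> (\<lambda>c. c \<oplus> p) ` N" by blast
qed

lemma uplus_closed_right_fiber:
  assumes N: "uplus_closed S N"
  shows "uplus_closed S {q\<in>N. q \<oplus> p = p}"
  unfolding uplus_closed_def
proof (intro ballI)
  fix x y assume "x \<in> {q\<in>N. q \<oplus> p = p}" "y \<in> {q\<in>N. q \<oplus> p = p}"
  moreover have "(x \<oplus> y) \<oplus> p = x \<oplus> (y \<oplus> p)" by (simp add: uplus_assoc)
  ultimately show "x \<oplus> y \<in> {q\<in>N. q \<oplus> p = p}" using N unfolding uplus_closed_def by simp
qed

text \<open>The Ellis--Numakura lemma: take a minimal closed subsemigroup \<open>N\<close> and \<open>p \<in> N\<close>; minimality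
  forces first \<open>N + p = N\<close> and then \<open>{q \<in> N. q + p = p} = N\<close>.\<close>
lemma closed_subsemigroup_idempotent:
  assumes M: "beta_closed S M" "M \<noteq> {}" "uplus_closed S M"
  shows "\<exists>p\<in>M. p \<oplus> p = p"
proof -
  define P where "P N \<longleftrightarrow> N \<subseteq> M \<and> uplus_closed S N" for N
  have "\<exists>N. P N \<and> beta_closed S N \<and> N \<noteq> {} \<and>
          (\<forall>N'. P N' \<and> beta_closed S N' \<and> N' \<noteq> {} \<and> N' \<subseteq> N \<longrightarrow> N' = N)"
  proof (rule beta_closed_minimal_exists)
    show "P M" unfolding P_def using M(3) by blast
    show "P (\<Inter>\<C>)" if "\<C> \<noteq> {}" "\<forall>C\<in>\<C>. P C \<and> beta_closed S C \<and> C \<noteq> {}" for \<C>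
      using that unfolding P_def uplus_closed_def by blast
  qed (use M in auto)
  then obtain N where "P N" and N: "beta_closed S N" "N \<noteq> {}"
    and minimal: "\<forall>N'. P N' \<and> beta_closed S N' \<and> N' \<noteq> {} \<and> N' \<subseteq> N \<longrightarrow> N' = N"
    by blast
  have min: "N' = N" if "N' \<subseteq> N" "uplus_closed S N'" "beta_closed S N'" "N' \<noteq> {}" for N'
    using minimal that \<open>P N\<close> unfolding P_def by blast
  from \<open>P N\<close> have "N \<subseteq> M" and N_mult: "uplus_closed S N" unfolding P_def by blast+
  have N_betaS: "N \<subseteq> betaS S" using beta_closed_subset[OF N(1)] .
  obtain p where p: "p \<in> N" using N(2) by blast
  have image: "(\<lambda>c. c \<oplus> p) ` N = N"
  proof (rule min)
    show "(\<lambda>c. c \<oplus> p) ` N \<subseteq> N" using N_mult p unfolding uplus_closed_def by blast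
    show "beta_closed S ((\<lambda>c. c \<oplus> p) ` N)"
      using beta_closed_uplus_right_image[OF N(1)] p N_betaS by blast
    show "(\<lambda>c. c \<oplus> p) ` N \<noteq> {}" using N(2) by blast
    show "uplus_closed S ((\<lambda>c. c \<oplus> p) ` N)" using uplus_closed_right_image[OF N_mult p] .
  qed
  have "p \<in> (\<lambda>c. c \<oplus> p) ` N" using p image by simp
  then obtain q where "q \<in> N" "q \<oplus> p = p" by blast
  have "{q\<in>N. q \<oplus> p = p} = N"
  proof (rule min)
    show "{q\<in>N. q \<oplus> p = p} \<subseteq> N" by blast
    show "{q\<in>N. q \<oplus> p = p} \<noteq> {}" using \<open>q \<in> N\<close> \<open>q \<oplus> p = p\<close> by blast
    show "beta_closed S {q\<in>N. q \<oplus> p = p}" using beta_closed_right_fiber[OF N(1)] p N_betaS by blast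
    show "uplus_closed S {q\<in>N. q \<oplus> p = p}" using uplus_closed_right_fiber[OF N_mult] .
  qed
  then show ?thesis using p \<open>N \<subseteq> M\<close> by blast
qed

lemma betaCl_Kideal_uplus_closed: "uplus_closed S (betaCl S K)"
  unfolding uplus_closed_def
proof (intro ballI)
  fix p r assume p: "p \<in> betaCl S K" and r: "r \<in> betaCl S K"
  have rO: "r \<in> Oplus S"
    using r betaCl_mono[OF Kideal_subset_Oplus, of S] beta_closedD[OF beta_closed_Oplus] by blast
  have "p \<oplus> r \<in> betaCl S ((\<lambda>c. c \<oplus> r) ` K)" using uplus_betaCl_right[OF p Oplus_betaS[OF rO]] .
  moreover have "(\<lambda>c. c \<oplus> r) ` K \<subseteq> K" using Kideal_uplus_right[OF rO] by blast
  ultimately show "p \<oplus> r \<in> betaCl S K" using betaCl_mono by blast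
qed

end

section \<open>Piecewise syndeticity near zero and the smallest ideal\<close>

lemma beta_closed_finite_subcover:
  assumes L: "beta_closed S L" and cover: "\<forall>r\<in>L. \<exists>t\<in>I. D t \<in> r" and D: "\<And>t. D t \<subseteq> S"
  shows "\<exists>F. finite F \<and> F \<subseteq> I \<and> (\<forall>r\<in>L. (\<Union>t\<in>F. D t) \<in> r)"
proof (rule ccontr)
  assume no_subcover: "\<not> ?thesis"
  define C where "C F = L \<inter> {r\<in>betaS S. S - (\<Union>t\<in>F. D t) \<in> r}" for F
  define \<C> where "\<C> = C ` {F. finite F \<and> F \<subseteq> I}"
  have "\<exists>r. \<forall>X\<in>\<C>. r \<in> X"
  proof (rule beta_closed_directed_Inter)
    show "\<C> \<noteq> {}" unfolding \<C>_def by blast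
  next
    fix X assume "X \<in> \<C>"
    then obtain F where F: "finite F" "F \<subseteq> I" "X = C F" unfolding \<C>_def by blast
    show "beta_closed S X" unfolding F(3) C_def by (rule beta_closed_Int[OF L beta_closed_basic])
    obtain r where r: "r \<in> L" "(\<Union>t\<in>F. D t) \<notin> r" using no_subcover F(1,2) by blast
    have "is_ultrafilter S r" using r(1) beta_closed_subset[OF L] by (auto simp: betaS_iff)
    moreover have "(\<Union>t\<in>F. D t) \<subseteq> S" using D by blast
    ultimately have "S - (\<Union>t\<in>F. D t) \<in> r" using r(2) ultrafilter_not_mem_iff by blast
    then show "X \<noteq> {}" using r(1) beta_closed_subset[OF L] unfolding F(3) C_def by blast
  next
    fix X Y assume "X \<in> \<C>" "Y \<in> \<C>"
    then obtain F G where FG: "finite F" "F \<subseteq> I" "X = C F" "finite G" "G \<subseteq> I" "Y = C G"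
      unfolding \<C>_def by blast
    have "C (F \<union> G) \<subseteq> X \<inter> Y"
    proof
      fix r assume "r \<in> C (F \<union> G)"
      then have r: "r \<in> L" "r \<in> betaS S" "S - (\<Union>t\<in>F \<union> G. D t) \<in> r" unfolding C_def by auto
      then have ur: "is_ultrafilter S r" by (simp add: betaS_iff)
      have "S - (\<Union>t\<in>F. D t) \<in> r" by (rule ultrafilter_mono[OF ur r(3)]) auto
      moreover have "S - (\<Union>t\<in>G. D t) \<in> r" by (rule ultrafilter_mono[OF ur r(3)]) auto
      ultimately show "r \<in> X \<inter> Y" using r(1,2) unfolding FG(3,6) C_def by blast
    qed
    moreover have "C (F \<union> G) \<in> \<C>" unfolding \<C>_def using FG by blast
    ultimately show "\<exists>Z\<in>\<C>. Z \<subseteq> X \<inter> Y" by blast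
  qed
  then obtain r where r: "\<forall>X\<in>\<C>. r \<in> X" by blast
  have "C {} \<in> \<C>" unfolding \<C>_def by blast
  then have "r \<in> L" "is_ultrafilter S r" using r unfolding C_def by (auto simp: betaS_iff)
  then obtain t where t: "t \<in> I" "D t \<in> r" using cover by blast
  have "C {t} \<in> \<C>" unfolding \<C>_def using t(1) by blast
  then have "S - D t \<in> r" using r unfolding C_def by auto
  then show False using t(2) ultrafilter_not_mem_iff[OF \<open>is_ultrafilter S r\<close> D] by blast
qed

lemma finite_pairs_below:
  assumes G: "finite G" "G \<subseteq> {0<..}" and \<delta>: "\<And>n. n \<ge> 1 \<Longrightarrow> \<delta> n < 1 / real n"
  shows "finite {(g, n). g \<in> G \<and> n \<ge> 1 \<and> g < \<delta> n}"
proof -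
  have "{(g, n). g \<in> G \<and> n \<ge> 1 \<and> g < \<delta> n} \<subseteq> (\<Union>g\<in>G. {g} \<times> {..nat \<lceil>1 / g\<rceil>})"
  proof
    fix x assume "x \<in> {(g, n). g \<in> G \<and> n \<ge> 1 \<and> g < \<delta> n}"
    then obtain g n where x: "x = (g, n)" "g \<in> G" "n \<ge> 1" "g < \<delta> n" by blast
    have "g > 0" using x(2) G(2) by auto
    have "g < 1 / real n" using x(3,4) \<delta>[of n] by linarith
    then have "real n < 1 / g" using x(3) \<open>g > 0\<close> by (simp add: field_simps)
    then have "n \<le> nat \<lceil>1 / g\<rceil>" using real_nat_ceiling_ge[of "1/g"] by linarith
    then show "x \<in> (\<Union>g\<in>G. {g} \<times> {..nat \<lceil>1 / g\<rceil>})" using x by blast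
  qed
  moreover have "finite (\<Union>g\<in>G. {g} \<times> {..nat \<lceil>1 / g\<rceil>})" using G(1) by blast
  ultimately show ?thesis by (rule finite_subset)
qed

context dense_semigroup begin

lemma Kideal_finite_shift_cover:
  assumes q: "q \<in> K" and B: "B \<in> q" and e: "e > 0"
  shows "\<exists>F. finite F \<and> F \<subseteq> {0<..<e} \<inter> S \<and>
             (\<forall>r\<in>principal_left_ideal q. (\<Union>t\<in>F. lshift S t B) \<in> r)"
proof (rule beta_closed_finite_subcover[OF beta_closed_principal_left_ideal[OF Kideal_Oplus[OF q]]])
  show "\<forall>r\<in>principal_left_ideal q. \<exists>t\<in>{0<..<e} \<inter> S. lshift S t B \<in> r"
  proof
    fix r assume "r \<in> principal_left_ideal q"
    then obtain w where w: "w \<in> Oplus S" "w \<oplus> r = q" using Kideal_principal_return[OF q] by blast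
    then have uw: "is_ultrafilter S w" by (simp add: Oplus_iff betaS_iff)
    have "{x\<in>S. lshift S x B \<in> r} \<in> w" using w(2) B unfolding uplus_def by auto
    moreover have "S \<inter> {0<..<e} \<in> w" using w(1) e unfolding Oplus_iff by blast
    ultimately have "{x\<in>S. lshift S x B \<in> r} \<inter> (S \<inter> {0<..<e}) \<noteq> {}"
      using ultrafilter_Int[OF uw] ultrafilter_nonempty[OF uw] by blast
    then show "\<exists>t\<in>{0<..<e} \<inter> S. lshift S t B \<in> r" by blast
  qed
qed (rule lshift_subset)

lemma Kideal_returns_near_zero:
  assumes q: "q \<in> K" and D: "\<forall>r\<in>principal_left_ideal q. D \<in> r"
  shows "\<exists>d>0. \<forall>s\<in>S \<inter> {0<..<d}. lshift S s D \<in> q"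
proof (rule ccontr)
  assume "\<not> ?thesis"
  then have "\<forall>e>0. {s\<in>S. lshift S s D \<notin> q} \<inter> {0<..<e} \<noteq> {}" by blast
  then obtain v where v: "v \<in> Oplus S" "{s\<in>S. lshift S s D \<notin> q} \<in> v"
    using Oplus_exists_mem[of "{s\<in>S. lshift S s D \<notin> q}"] by blast
  have "v \<oplus> q \<in> principal_left_ideal q" using v(1) by blast
  then have "{s\<in>S. lshift S s D \<in> q} \<in> v" using D unfolding uplus_def by blast
  moreover have uv: "is_ultrafilter S v" using v(1) by (simp add: Oplus_iff betaS_iff)
  ultimately have "{s\<in>S. lshift S s D \<in> q} \<inter> {s\<in>S. lshift S s D \<notin> q} \<in> v"
    using ultrafilter_Int v(2) by blast
  then show False using ultrafilter_nonempty[OF uv] by blast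
qed

lemma Kideal_syndetic_data:
  assumes q: "q \<in> K" and B: "B \<in> q" and e: "e > 0"
  shows "\<exists>F \<delta>. finite F \<and> F \<noteq> {} \<and> F \<subseteq> {0<..<e} \<inter> S \<and> 0 < \<delta> \<and> \<delta> < e \<and>
               (\<forall>s\<in>S. s < \<delta> \<longrightarrow> lshift S s (\<Union>t\<in>F. lshift S t B) \<in> q)"
proof -
  obtain F where F: "finite F" "F \<subseteq> {0<..<e} \<inter> S"
    and cover: "\<forall>r\<in>principal_left_ideal q. (\<Union>t\<in>F. lshift S t B) \<in> r"
    using Kideal_finite_shift_cover[OF q B e] by blast
  have "(\<Union>t\<in>F. lshift S t B) \<in> q" using cover Kideal_mem_principal[OF q] by blast
  then have "F \<noteq> {}" using ultrafilter_nonempty[of S q] Kideal_Oplus[OF q] by (auto simp: Oplus_iff betaS_iff)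
  obtain d where d: "d > 0" "\<forall>s\<in>S \<inter> {0<..<d}. lshift S s (\<Union>t\<in>F. lshift S t B) \<in> q"
    using Kideal_returns_near_zero[OF q cover] by blast
  have "\<forall>s\<in>S. s < min d (e/2) \<longrightarrow> lshift S s (\<Union>t\<in>F. lshift S t B) \<in> q"
    using d(2) S_pos by auto
  with F \<open>F \<noteq> {}\<close> d(1) e show ?thesis
    by (intro exI[of _ F] exI[of _ "min d (e/2)"]) auto
qed

lemma piecewise_syndetic_near_zeroI:
  assumes q: "q \<in> Oplus S"
    and F: "\<And>n. n \<ge> 1 \<Longrightarrow> finite (F n) \<and> F n \<noteq> {} \<and> F n \<subseteq> {0<..<1 / real n} \<inter> S \<and>
                          0 < \<delta> n \<and> \<delta> n < 1 / real n"
    and returns: "\<And>n s. n \<ge> 1 \<Longrightarrow> s \<in> S \<Longrightarrow> s < \<delta> n \<Longrightarrow> lshift S s (\<Union>t\<in>F n. lshift S t B) \<in> q"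
  shows "piecewise_syndetic_near_zero S B"
  unfolding piecewise_syndetic_near_zero_def
proof (intro exI[of _ F] exI[of _ \<delta>] conjI[OF allI[OF impI[OF F]]] allI impI)
  fix G :: "real set" and \<mu> :: real
  assume G: "finite G \<and> G \<noteq> {} \<and> G \<subseteq> S" and \<mu>: "0 < \<mu>"
  have uq: "is_ultrafilter S q" using q by (simp add: Oplus_iff betaS_iff)
  define I where "I = {(g, n). g \<in> G \<and> n \<ge> 1 \<and> g < \<delta> n}"
  define D where "D n = (\<Union>t\<in>F n. lshift S t B)" for n
  have "finite I" unfolding I_def using finite_pairs_below[of G \<delta>] G F S_pos by blast
  then have "S \<inter> (\<Inter>(g, n)\<in>I. lshift S g (D n)) \<in> q"
  proof (rule ultrafilter_INT[OF _ uq], intro ballI)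
    fix i assume "i \<in> I"
    then obtain g n where "i = (g, n)" "g \<in> G" "n \<ge> 1" "g < \<delta> n" unfolding I_def by blast
    then show "(case i of (g, n) \<Rightarrow> lshift S g (D n)) \<in> q"
      using returns G unfolding D_def by auto
  qed
  moreover have "S \<inter> {0<..<\<mu>} \<in> q" using q \<mu> unfolding Oplus_iff by blast
  ultimately have "S \<inter> (\<Inter>(g, n)\<in>I. lshift S g (D n)) \<inter> (S \<inter> {0<..<\<mu>}) \<noteq> {}"
    using ultrafilter_Int[OF uq] ultrafilter_nonempty[OF uq] by blast
  then obtain y where y: "y \<in> {0<..<\<mu>} \<inter> S" "\<And>g n. (g, n) \<in> I \<Longrightarrow> y \<in> lshift S g (D n)"
    by blast
  have "(\<lambda>g. g + y) ` (G \<inter> {0<..<\<delta> n}) \<subseteq> D n" if "n \<ge> 1" for n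
    using y(2) that unfolding I_def lshift_def by auto
  with y(1) show "\<exists>x\<in>{0<..<\<mu>} \<inter> S. \<forall>n\<ge>1. (\<lambda>g. g + x) ` (G \<inter> {0<..<\<delta> n}) \<subseteq> (\<Union>t\<in>F n. lshift S t B)"
    unfolding D_def by blast
qed

lemma piecewise_syndetic_near_zero_if_Kideal:
  assumes q: "q \<in> K" and B: "B \<in> q"
  shows "piecewise_syndetic_near_zero S B"
proof -
  have "\<forall>n. \<exists>F \<delta>. n \<ge> 1 \<longrightarrow> finite F \<and> F \<noteq> {} \<and> F \<subseteq> {0<..<1 / real n} \<inter> S \<and>
           0 < \<delta> \<and> \<delta> < 1 / real n \<and> (\<forall>s\<in>S. s < \<delta> \<longrightarrow> lshift S s (\<Union>t\<in>F. lshift S t B) \<in> q)"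
  proof
    fix n :: nat
    show "\<exists>F \<delta>. n \<ge> 1 \<longrightarrow> finite F \<and> F \<noteq> {} \<and> F \<subseteq> {0<..<1 / real n} \<inter> S \<and>
           0 < \<delta> \<and> \<delta> < 1 / real n \<and> (\<forall>s\<in>S. s < \<delta> \<longrightarrow> lshift S s (\<Union>t\<in>F. lshift S t B) \<in> q)"
    proof (cases "n \<ge> 1")
      case True
      then have "1 / real n > 0" by simp
      from Kideal_syndetic_data[OF q B this] show ?thesis by blast
    qed blast
  qed
  then obtain F \<delta> where F\<delta>: "\<And>n. n \<ge> 1 \<Longrightarrow> finite (F n) \<and> F n \<noteq> {} \<and> F n \<subseteq> {0<..<1 / real n} \<inter> S \<and>
           0 < \<delta> n \<and> \<delta> n < 1 / real n \<and> (\<forall>s\<in>S. s < \<delta> n \<longrightarrow> lshift S s (\<Union>t\<in>F n. lshift S t B) \<in> q)"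
    by metis
  show ?thesis
  proof (rule piecewise_syndetic_near_zeroI[OF Kideal_Oplus[OF q]])
    show "finite (F n) \<and> F n \<noteq> {} \<and> F n \<subseteq> {0<..<1 / real n} \<inter> S \<and> 0 < \<delta> n \<and> \<delta> n < 1 / real n"
      if "n \<ge> 1" for n
      using F\<delta>[OF that] by blast
    show "lshift S s (\<Union>t\<in>F n. lshift S t B) \<in> q" if "n \<ge> 1" "s \<in> S" "s < \<delta> n" for n s
      using F\<delta>[OF that(1)] that(2,3) by blast
  qed
qed

lemma Oplus_contains_antitone_family:
  assumes nonempty: "\<And>G \<mu>. finite G \<Longrightarrow> G \<noteq> {} \<Longrightarrow> G \<subseteq> S \<Longrightarrow> \<mu> > 0 \<Longrightarrow> X G \<mu> \<noteq> {}"
    and antitone: "\<And>G G' \<mu> \<mu>'. G \<subseteq> G' \<Longrightarrow> \<mu>' \<le> \<mu> \<Longrightarrow> X G' \<mu>' \<subseteq> X G \<mu>"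
    and near_zero: "\<And>G \<mu>. X G \<mu> \<subseteq> S \<inter> {0<..<\<mu>}"
  shows "\<exists>r\<in>Oplus S. \<forall>G \<mu>. finite G \<and> G \<noteq> {} \<and> G \<subseteq> S \<and> \<mu> > 0 \<longrightarrow> X G \<mu> \<in> r"
proof -
  define \<B> where "\<B> = {X G \<mu> | G \<mu>. finite G \<and> G \<noteq> {} \<and> G \<subseteq> S \<and> \<mu> > 0}"
  have BI: "X G \<mu> \<in> \<B>" if "finite G" "G \<noteq> {}" "G \<subseteq> S" "\<mu> > 0" for G \<mu>
    unfolding \<B>_def using that by (intro CollectI exI[of _ G] exI[of _ \<mu>] conjI refl)
  obtain s0 where s0: "s0 \<in> S" using S_meets_near_zero[of 1] by auto
  have "\<exists>r. is_ultrafilter S r \<and> \<B> \<subseteq> r"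
  proof (rule ultrafilter_exists)
    show "\<B> \<subseteq> Pow S" unfolding \<B>_def using near_zero by blast
    have "X {s0} 1 \<in> \<B>" using s0 by (intro BI) auto
    then show "\<B> \<noteq> {}" by blast
    show "{} \<notin> \<B>"
    proof
      assume "{} \<in> \<B>"
      then obtain G \<mu> where "{} = X G \<mu>" "finite G" "G \<noteq> {}" "G \<subseteq> S" "\<mu> > 0" unfolding \<B>_def by blast
      then show False using nonempty by metis
    qed
    show "\<forall>A\<in>\<B>. \<forall>C\<in>\<B>. \<exists>E\<in>\<B>. E \<subseteq> A \<inter> C"
    proof (intro ballI)
      fix A C assume "A \<in> \<B>" "C \<in> \<B>"
      then obtain G1 \<mu>1 G2 \<mu>2 where g: "A = X G1 \<mu>1" "finite G1" "G1 \<noteq> {}" "G1 \<subseteq> S" "\<mu>1 > 0"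
        "C = X G2 \<mu>2" "finite G2" "G2 \<noteq> {}" "G2 \<subseteq> S" "\<mu>2 > 0" unfolding \<B>_def by blast
      have "X (G1 \<union> G2) (min \<mu>1 \<mu>2) \<in> \<B>" using g by (intro BI) auto
      moreover have "X (G1 \<union> G2) (min \<mu>1 \<mu>2) \<subseteq> A" unfolding g(1) by (rule antitone) auto
      moreover have "X (G1 \<union> G2) (min \<mu>1 \<mu>2) \<subseteq> C" unfolding g(6) by (rule antitone) auto
      ultimately show "\<exists>E\<in>\<B>. E \<subseteq> A \<inter> C" by blast
    qed
  qed
  then obtain r where ur: "is_ultrafilter S r" and Br: "\<B> \<subseteq> r" by blast
  have "S \<inter> {0<..<e} \<in> r" if e: "e > 0" for e
  proof -
    have "X {s0} e \<in> r" using Br BI[of "{s0}" e] s0 e by blast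
    then show ?thesis by (rule ultrafilter_mono[OF ur]) (use near_zero in auto)
  qed
  then have "r \<in> Oplus S" using ur unfolding Oplus_iff betaS_iff by blast
  moreover have "X G \<mu> \<in> r" if "finite G" "G \<noteq> {}" "G \<subseteq> S" "\<mu> > 0" for G \<mu>
    using Br BI[OF that] by blast
  ultimately show ?thesis by blast
qed

lemma Kideal_mem_if_returns_near_zero:
  assumes u: "u \<in> K" and B: "B \<subseteq> S" and returns: "\<forall>e>0. \<exists>s\<in>S \<inter> {0<..<e}. lshift S s B \<in> u"
  shows "\<exists>q\<in>K. B \<in> q"
proof -
  have "\<forall>e>0. {s\<in>S. lshift S s B \<in> u} \<inter> {0<..<e} \<noteq> {}" using returns by blast
  then obtain v where v: "v \<in> Oplus S" "{s\<in>S. lshift S s B \<in> u} \<in> v"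
    using Oplus_exists_mem[of "{s\<in>S. lshift S s B \<in> u}"] by blast
  have "B \<in> v \<oplus> u" unfolding uplus_def using v(2) B by simp
  moreover have "v \<oplus> u \<in> K" using Kideal_uplus_left[OF v(1) u] .
  ultimately show ?thesis by blast
qed

lemma uplus_mem_if_lshift_near_zero:
  assumes w: "w \<in> Oplus S" and D: "D \<subseteq> S" and d: "d > 0"
    and returns: "\<And>g. g \<in> S \<Longrightarrow> g < d \<Longrightarrow> lshift S g D \<in> r"
  shows "D \<in> w \<oplus> r"
proof -
  have uw: "is_ultrafilter S w" using w by (simp add: Oplus_iff betaS_iff)
  have "S \<inter> {0<..<d} \<subseteq> {x\<in>S. lshift S x D \<in> r}" using returns by auto
  moreover have "S \<inter> {0<..<d} \<in> w" using w d unfolding Oplus_iff by blast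
  ultimately have "{x\<in>S. lshift S x D \<in> r} \<in> w"
    using ultrafilter_mono[OF uw, of "S \<inter> {0<..<d}"] by blast
  then show ?thesis unfolding uplus_def using D by simp
qed

lemma Kideal_if_piecewise_syndetic_near_zero:
  assumes B: "B \<subseteq> S" and ps: "piecewise_syndetic_near_zero S B"
  shows "\<exists>q\<in>K. B \<in> q"
proof -
  obtain F :: "nat \<Rightarrow> real set" and \<delta> :: "nat \<Rightarrow> real" where
    F: "\<forall>n\<ge>1. finite (F n) \<and> F n \<noteq> {} \<and> F n \<subseteq> {0<..<1 / real n} \<inter> S \<and> 0 < \<delta> n \<and> \<delta> n < 1 / real n"
    and hits: "\<forall>G. finite G \<and> G \<noteq> {} \<and> G \<subseteq> S \<longrightarrow>
           (\<forall>\<mu>>0. \<exists>x\<in>{0<..<\<mu>} \<inter> S. \<forall>n\<ge>1.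
              (\<lambda>g. g + x) ` (G \<inter> {0<..<\<delta> n}) \<subseteq> (\<Union>t\<in>F n. lshift S t B))"
    using ps unfolding piecewise_syndetic_near_zero_def by (elim exE conjE) (rule that)
  define D where "D n = (\<Union>t\<in>F n. lshift S t B)" for n
  define X where "X G \<mu> = {x\<in>{0<..<\<mu>} \<inter> S. \<forall>n\<ge>1. (\<lambda>g. g + x) ` (G \<inter> {0<..<\<delta> n}) \<subseteq> D n}" for G \<mu>
  have "\<exists>r\<in>Oplus S. \<forall>G \<mu>. finite G \<and> G \<noteq> {} \<and> G \<subseteq> S \<and> \<mu> > 0 \<longrightarrow> X G \<mu> \<in> r"
  proof (rule Oplus_contains_antitone_family)
    show "X G \<mu> \<noteq> {}" if "finite G" "G \<noteq> {}" "G \<subseteq> S" "\<mu> > 0" for G \<mu>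
    proof -
      have "\<exists>x\<in>{0<..<\<mu>} \<inter> S. \<forall>n\<ge>1. (\<lambda>g. g + x) ` (G \<inter> {0<..<\<delta> n}) \<subseteq> D n"
        using mp[OF spec[OF hits, of G]] that unfolding D_def by blast
      then show ?thesis unfolding X_def by blast
    qed
    show "X G' \<mu>' \<subseteq> X G \<mu>" if "G \<subseteq> G'" "\<mu>' \<le> \<mu>" for G G' \<mu> \<mu>'
    proof
      fix x assume "x \<in> X G' \<mu>'"
      then have "x \<in> {0<..<\<mu>'} \<inter> S" "\<And>n. n \<ge> 1 \<Longrightarrow> (\<lambda>g. g + x) ` (G' \<inter> {0<..<\<delta> n}) \<subseteq> D n"
        unfolding X_def by auto
      with that show "x \<in> X G \<mu>" unfolding X_def by auto
    qed
    show "X G \<mu> \<subseteq> S \<inter> {0<..<\<mu>}" for G \<mu> unfolding X_def by auto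
  qed
  then obtain r where r: "r \<in> Oplus S" and Xr: "\<And>G \<mu>. finite G \<Longrightarrow> G \<noteq> {} \<Longrightarrow> G \<subseteq> S \<Longrightarrow> \<mu> > 0 \<Longrightarrow> X G \<mu> \<in> r"
    by blast
  have ur: "is_ultrafilter S r" using r by (simp add: Oplus_iff betaS_iff)
  have Dr: "lshift S g (D n) \<in> r" if n: "n \<ge> 1" and g: "g \<in> S" "g < \<delta> n" for n g
  proof -
    have "X {g} 1 \<in> r" by (rule Xr) (use g in auto)
    moreover have "X {g} 1 \<subseteq> lshift S g (D n)"
      unfolding X_def lshift_def using n g S_pos[OF g(1)] by (auto simp: add.commute)
    ultimately show ?thesis using ultrafilter_mono[OF ur _ _ lshift_subset] by blast
  qed
  obtain w where w: "w \<in> K" using Kideal_nonempty by blast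
  have u: "w \<oplus> r \<in> K" using Kideal_uplus_right[OF r w] .
  have uu: "is_ultrafilter S (w \<oplus> r)" using Kideal_Oplus[OF u] by (simp add: Oplus_iff betaS_iff)
  have Du: "D n \<in> w \<oplus> r" if n: "n \<ge> 1" for n
  proof (rule uplus_mem_if_lshift_near_zero[OF Kideal_Oplus[OF w] _ _ Dr[OF n]])
    show "D n \<subseteq> S" unfolding D_def using lshift_subset by blast
    show "\<delta> n > 0" using F n by blast
  qed
  have "\<exists>s\<in>S \<inter> {0<..<e}. lshift S s B \<in> w \<oplus> r" if e: "e > 0" for e
  proof -
    obtain n :: nat where n: "n > 0" "inverse (real n) < e" using ex_inverse_of_nat_less[OF e] by blast
    then have n1: "n \<ge> 1" by simp
    have fin: "finite (F n)" and Fs: "F n \<subseteq> {0<..<1 / real n} \<inter> S" using F n1 by blast+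
    obtain t where t: "t \<in> F n" "lshift S t B \<in> w \<oplus> r"
      using ultrafilter_UN[OF fin uu, of "\<lambda>t. lshift S t B"] Du[OF n1] unfolding D_def by blast
    have "t \<in> S" "0 < t" "t < e" using t(1) Fs n(2) by (auto simp: field_simps)
    with t(2) show ?thesis by (intro bexI[of _ t]) auto
  qed
  then show ?thesis using Kideal_mem_if_returns_near_zero[OF u B] by blast
qed

end

section \<open>Quasi-central sets from jointly intermittently uniformly recurrent pairs\<close>

definition joint_returns :: "real set \<Rightarrow> (real \<Rightarrow> 'a \<Rightarrow> 'a) \<Rightarrow> 'a \<Rightarrow> 'a \<Rightarrow> 'a set \<Rightarrow> real set" where
  "joint_returns S T x y V = {s\<in>S. T s x \<in> V \<and> T s y \<in> V}"

context dense_semigroup begin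

lemma joint_returns_lshift:
  assumes dyn: "dynamical_system S X T" and x: "x \<in> topspace X" and y: "y \<in> topspace X"
    and V: "openin X V" and s: "s \<in> joint_returns S T x y V"
  shows "\<exists>V'. openin X V' \<and> y \<in> V' \<and> joint_returns S T x y V' \<subseteq> lshift S s (joint_returns S T x y V)"
proof (intro exI conjI)
  have sS: "s \<in> S" and sy: "T s y \<in> V" using s unfolding joint_returns_def by auto
  have cont: "continuous_map X X (T s)" and comp: "\<And>t z. t \<in> S \<Longrightarrow> z \<in> topspace X \<Longrightarrow> T s (T t z) = T (s + t) z"
    using dyn sS unfolding dynamical_system_def by blast+
  show "openin X {z \<in> topspace X. T s z \<in> V}" using openin_continuous_map_preimage[OF cont V] .
  show "y \<in> {z \<in> topspace X. T s z \<in> V}" using y sy by blast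
  show "joint_returns S T x y {z \<in> topspace X. T s z \<in> V} \<subseteq> lshift S s (joint_returns S T x y V)"
    unfolding joint_returns_def lshift_def using comp x y S_add[OF sS] by auto
qed

lemma JIUR0_returns_in_betaCl_Kideal:
  assumes J: "JIUR0 S X T x y" and y: "y \<in> topspace X"
  shows "\<exists>p\<in>betaCl S K. \<forall>V. openin X V \<and> y \<in> V \<longrightarrow> joint_returns S T x y V \<in> p"
proof -
  define \<V> where "\<V> = {V. openin X V \<and> y \<in> V}"
  define C where "C V = betaCl S K \<inter> {p\<in>betaS S. joint_returns S T x y V \<in> p}" for V
  have R_S: "joint_returns S T x y V \<subseteq> S" for V unfolding joint_returns_def by blast
  have "\<exists>p. \<forall>Z\<in>C ` \<V>. p \<in> Z"
  proof (rule beta_closed_directed_Inter)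
    show "C ` \<V> \<noteq> {}" unfolding \<V>_def using y by blast
  next
    fix Z assume "Z \<in> C ` \<V>"
    then obtain V where V: "V \<in> \<V>" "Z = C V" by blast
    show "beta_closed S Z" unfolding V(2) C_def by (rule beta_closed_Int[OF beta_closed_betaCl beta_closed_basic])
    have "is_nbhd X V y" using V(1) openin_subset unfolding \<V>_def is_nbhd_def by blast
    then have "piecewise_syndetic_near_zero S (joint_returns S T x y V)"
      using J unfolding JIUR0_def joint_returns_def by blast
    then obtain q where "q \<in> K" "joint_returns S T x y V \<in> q"
      using Kideal_if_piecewise_syndetic_near_zero[OF R_S] by blast
    moreover have "K \<subseteq> betaS S" using Kideal_subset_Oplus Oplus_subset_betaS by blast
    ultimately show "Z \<noteq> {}" unfolding V(2) C_def using betaCl_superset[of K S] by blast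
  next
    fix Z1 Z2 assume "Z1 \<in> C ` \<V>" "Z2 \<in> C ` \<V>"
    then obtain V1 V2 where V: "V1 \<in> \<V>" "V2 \<in> \<V>" "Z1 = C V1" "Z2 = C V2" by blast
    have "C (V1 \<inter> V2) \<subseteq> Z1 \<inter> Z2"
    proof
      fix p assume "p \<in> C (V1 \<inter> V2)"
      then have p: "p \<in> betaCl S K" "p \<in> betaS S" "joint_returns S T x y (V1 \<inter> V2) \<in> p"
        unfolding C_def by auto
      then have up: "is_ultrafilter S p" by (simp add: betaS_iff)
      have "joint_returns S T x y V1 \<in> p" "joint_returns S T x y V2 \<in> p"
        using ultrafilter_mono[OF up p(3) _ R_S] unfolding joint_returns_def by blast+
      with p(1,2) show "p \<in> Z1 \<inter> Z2" unfolding V(3,4) C_def by blast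
    qed
    moreover have "V1 \<inter> V2 \<in> \<V>" using V(1,2) unfolding \<V>_def by auto
    ultimately show "\<exists>Z3\<in>C ` \<V>. Z3 \<subseteq> Z1 \<inter> Z2" by blast
  qed
  then obtain p where "\<forall>V\<in>\<V>. p \<in> C V" by blast
  moreover have "topspace X \<in> \<V>" unfolding \<V>_def using y by simp
  ultimately show ?thesis unfolding C_def \<V>_def by blast
qed

lemma JIUR0_returns_uplus_closed:
  assumes dyn: "dynamical_system S X T" and x: "x \<in> topspace X" and y: "y \<in> topspace X"
  shows "uplus_closed S {p\<in>betaCl S K. \<forall>V. openin X V \<and> y \<in> V \<longrightarrow> joint_returns S T x y V \<in> p}"
  unfolding uplus_closed_def
proof (intro ballI CollectI conjI allI impI)
  fix p r V
  assume p: "p \<in> {p\<in>betaCl S K. \<forall>V. openin X V \<and> y \<in> V \<longrightarrow> joint_returns S T x y V \<in> p}"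
    and r: "r \<in> {p\<in>betaCl S K. \<forall>V. openin X V \<and> y \<in> V \<longrightarrow> joint_returns S T x y V \<in> p}"
  then show "p \<oplus> r \<in> betaCl S K" using betaCl_Kideal_uplus_closed unfolding uplus_closed_def by blast
  assume V: "openin X V \<and> y \<in> V"
  have up: "is_ultrafilter S p" and ur: "is_ultrafilter S r"
    using p r betaCl_ultrafilter by blast+
  have "lshift S s (joint_returns S T x y V) \<in> r" if s: "s \<in> joint_returns S T x y V" for s
  proof -
    obtain V' where "openin X V'" "y \<in> V'"
      and sub: "joint_returns S T x y V' \<subseteq> lshift S s (joint_returns S T x y V)"
      using joint_returns_lshift[OF dyn x y _ s] V by blast
    then have "joint_returns S T x y V' \<in> r" using r by blast
    then show ?thesis using ultrafilter_mono[OF ur _ sub lshift_subset] by blast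
  qed
  then have "joint_returns S T x y V \<subseteq> {s\<in>S. lshift S s (joint_returns S T x y V) \<in> r}"
    unfolding joint_returns_def by blast
  moreover have "joint_returns S T x y V \<in> p" using p V by blast
  ultimately have "{s\<in>S. lshift S s (joint_returns S T x y V) \<in> r} \<in> p"
    using ultrafilter_mono[OF up] by blast
  then show "joint_returns S T x y V \<in> p \<oplus> r"
    unfolding uplus_def joint_returns_def by auto
qed

lemma quasi_central_near_zero_if_JIUR0:
  assumes dyn: "dynamical_system S X T" and x: "x \<in> topspace X" and y: "y \<in> topspace X"
    and J: "JIUR0 S X T x y" and U: "is_nbhd X U y" and A: "A = {s\<in>S. T s x \<in> U}"
  shows "quasi_central_near_zero S A"
proof -
  define M where "M = {p\<in>betaCl S K. \<forall>V. openin X V \<and> y \<in> V \<longrightarrow> joint_returns S T x y V \<in> p}"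
  have "M = betaCl S K \<inter> (\<Inter>V\<in>{V. openin X V \<and> y \<in> V}. {p\<in>betaS S. joint_returns S T x y V \<in> p})"
    unfolding M_def using betaCl_subset by blast
  moreover have "{V. openin X V \<and> y \<in> V} \<noteq> {}" using y by blast
  ultimately have "beta_closed S M"
    using beta_closed_Int[OF beta_closed_betaCl beta_closed_Inter] beta_closed_basic by auto
  moreover have "M \<noteq> {}" unfolding M_def using JIUR0_returns_in_betaCl_Kideal[OF J y] by blast
  moreover have "uplus_closed S M" unfolding M_def using JIUR0_returns_uplus_closed[OF dyn x y] .
  ultimately obtain p where p: "p \<in> M" "p \<oplus> p = p" using closed_subsemigroup_idempotent by blast
  obtain V where V: "openin X V" "y \<in> V" "V \<subseteq> U" using U unfolding is_nbhd_def by blast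
  have "joint_returns S T x y V \<in> p" using p(1) V unfolding M_def by blast
  moreover have "joint_returns S T x y V \<subseteq> A" unfolding A joint_returns_def using V(3) by blast
  moreover have "is_ultrafilter S p" using p(1) betaCl_ultrafilter unfolding M_def by blast
  ultimately have "A \<in> p" using ultrafilter_mono[of S p _ A] A by blast
  then show ?thesis unfolding quasi_central_near_zero_def using p M_def by blast
qed

end

section \<open>The shift system on \<open>{0,1}\<^sup>\<real>\<close>\<close>

definition bool_product :: "(real \<Rightarrow> bool) topology" where
  "bool_product = product_topology (\<lambda>_. discrete_topology UNIV) UNIV"

definition shift :: "real \<Rightarrow> (real \<Rightarrow> bool) \<Rightarrow> (real \<Rightarrow> bool)" where
  "shift s f = (\<lambda>t. f (s + t))"

lemma topspace_bool_product [simp]: "topspace bool_product = UNIV"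
  unfolding bool_product_def by simp

lemma continuous_map_bool_product_coordinate:
  "continuous_map bool_product (discrete_topology UNIV) (\<lambda>f. f i)"
  unfolding bool_product_def by (rule continuous_map_product_projection) simp

lemma openin_bool_product_coordinate: "openin bool_product {f. f i}"
proof -
  have "openin bool_product {f \<in> topspace bool_product. f i \<in> {True}}"
    by (rule openin_continuous_map_preimage[OF continuous_map_bool_product_coordinate]) simp
  then show ?thesis by simp
qed

lemma dynamical_system_shift: "dynamical_system S bool_product shift"
  unfolding dynamical_system_def
proof (intro conjI ballI)
  show "compact_space bool_product"
    unfolding bool_product_def by (simp add: compact_space_product_topology compact_space_discrete_topology)
  show "Hausdorff_space bool_product"
    unfolding bool_product_def by (simp add: Hausdorff_space_product_topology)
  fix s assume "s \<in> S"
  have "continuous_map bool_product (discrete_topology UNIV) (\<lambda>f. shift s f k)" for k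
    unfolding shift_def using continuous_map_bool_product_coordinate by simp
  then show "continuous_map bool_product bool_product (shift s)"
    unfolding bool_product_def continuous_map_componentwise_UNIV by (simp add: bool_product_def)
  show "shift s (shift t z) = shift (s + t) z" for t z
    unfolding shift_def by (simp add: algebra_simps)
qed

lemma bool_product_open_cylinder:
  assumes V: "openin bool_product V" and y: "y \<in> V"
  obtains J where "finite J" "\<And>f. \<forall>i\<in>J. f i = y i \<Longrightarrow> f \<in> V"
proof -
  obtain Us where Us: "y \<in> (\<Pi>\<^sub>E i\<in>UNIV. Us i)" "finite {i. Us i \<noteq> topspace (discrete_topology (UNIV::bool set))}"
      "(\<Pi>\<^sub>E i\<in>UNIV. Us i) \<subseteq> V"
    using product_topology_open_contains_basis[OF V[unfolded bool_product_def] y] by blast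
  have "f \<in> V" if "\<forall>i\<in>{i. Us i \<noteq> UNIV}. f i = y i" for f
  proof -
    have "f i \<in> Us i" for i using that Us(1) by (cases "Us i = UNIV") (auto simp: PiE_iff)
    then show ?thesis using Us(3) by (auto simp: PiE_iff)
  qed
  moreover have "finite {i. Us i \<noteq> UNIV}" using Us(2) by simp
  ultimately show thesis using that by blast
qed

context dense_semigroup begin

text \<open>Idempotence turns \<open>E \<in> p\<close> into \<open>{s. -s+E \<in> p} \<in> p\<close>, so for \<open>p\<close>-many \<open>s\<close> the coordinate
  \<open>i\<close> of both shifted points agrees with \<open>y i\<close>.\<close>
lemma idempotent_shift_agreement:
  assumes up: "is_ultrafilter S p" and idem: "p \<oplus> p = p" and y: "\<And>t. y t \<longleftrightarrow> {u\<in>S. u + t \<in> A} \<in> p"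
  shows "{s\<in>S. (s + i \<in> A \<longleftrightarrow> y i) \<and> (y (s + i) \<longleftrightarrow> y i)} \<in> p"
proof -
  define E where "E = {u\<in>S. u + i \<in> A}"
  have E_S: "E \<subseteq> S" unfolding E_def by blast
  have y_shift: "y (s + i) \<longleftrightarrow> lshift S s E \<in> p" if "s \<in> S" for s
  proof -
    have "{u\<in>S. u + (s + i) \<in> A} = lshift S s E"
      unfolding lshift_def E_def using that S_add by (auto simp: algebra_simps)
    then show ?thesis using y by simp
  qed
  have E_idem: "E \<in> p \<longleftrightarrow> {s\<in>S. lshift S s E \<in> p} \<in> p"
    using idem E_S unfolding uplus_def by (metis (no_types, lifting) mem_Collect_eq)
  show ?thesis
  proof (cases "y i")
    case True
    then have "{s\<in>S. (s + i \<in> A \<longleftrightarrow> y i) \<and> (y (s + i) \<longleftrightarrow> y i)} = E \<inter> {s\<in>S. lshift S s E \<in> p}"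
      using y_shift unfolding E_def by auto
    moreover have "E \<in> p" using True y unfolding E_def by simp
    ultimately show ?thesis using E_idem ultrafilter_Int[OF up] by simp
  next
    case False
    then have "{s\<in>S. (s + i \<in> A \<longleftrightarrow> y i) \<and> (y (s + i) \<longleftrightarrow> y i)} = (S - E) \<inter> (S - {s\<in>S. lshift S s E \<in> p})"
      using y_shift unfolding E_def by auto
    moreover have "E \<notin> p" using False y unfolding E_def by simp
    then have "S - E \<in> p" "S - {s\<in>S. lshift S s E \<in> p} \<in> p"
      using E_idem ultrafilter_not_mem_iff[OF up E_S]
        ultrafilter_not_mem_iff[OF up, of "{s\<in>S. lshift S s E \<in> p}"] by blast+
    ultimately show ?thesis using ultrafilter_Int[OF up] by simp
  qed
qed

lemma JIUR0_shift:
  assumes p: "p \<in> betaCl S K" "p \<oplus> p = p" and y: "\<And>t. y t \<longleftrightarrow> {u\<in>S. u + t \<in> A} \<in> p"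
  shows "JIUR0 S bool_product shift (\<lambda>t. t \<in> A) y"
  unfolding JIUR0_def
proof (intro allI impI)
  fix W assume "is_nbhd bool_product W y"
  then obtain V where V: "openin bool_product V" "y \<in> V" "V \<subseteq> W" unfolding is_nbhd_def by blast
  obtain J where J: "finite J" "\<And>f. \<forall>i\<in>J. f i = y i \<Longrightarrow> f \<in> V"
    using bool_product_open_cylinder[OF V(1,2)] by blast
  have up: "is_ultrafilter S p" using p(1) by (rule betaCl_ultrafilter)
  define E where "E i = {s\<in>S. (s + i \<in> A \<longleftrightarrow> y i) \<and> (y (s + i) \<longleftrightarrow> y i)}" for i
  have "S \<inter> (\<Inter>i\<in>J. E i) \<in> p"
    by (rule ultrafilter_INT[OF J(1) up]) (use idempotent_shift_agreement[OF up p(2) y] in \<open>simp add: E_def\<close>)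
  moreover have "S \<inter> (\<Inter>i\<in>J. E i) \<subseteq> {s\<in>S. shift s (\<lambda>t. t \<in> A) \<in> W \<and> shift s y \<in> W}"
  proof
    fix s assume s: "s \<in> S \<inter> (\<Inter>i\<in>J. E i)"
    then have "shift s (\<lambda>t. t \<in> A) \<in> V" "shift s y \<in> V"
      using J(2) unfolding E_def shift_def by auto
    with s V(3) show "s \<in> {s\<in>S. shift s (\<lambda>t. t \<in> A) \<in> W \<and> shift s y \<in> W}" by blast
  qed
  ultimately have "{s\<in>S. shift s (\<lambda>t. t \<in> A) \<in> W \<and> shift s y \<in> W} \<in> p"
    using ultrafilter_mono[OF up] by blast
  then obtain q where "q \<in> K" "{s\<in>S. shift s (\<lambda>t. t \<in> A) \<in> W \<and> shift s y \<in> W} \<in> q"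
    using p(1) unfolding betaCl_iff by blast
  then show "piecewise_syndetic_near_zero S {s\<in>S. shift s (\<lambda>t. t \<in> A) \<in> W \<and> shift s y \<in> W}"
    by (rule piecewise_syndetic_near_zero_if_Kideal)
qed

lemma JIUR0_if_quasi_central_near_zero:
  assumes qc: "quasi_central_near_zero S A" and A: "A \<subseteq> S"
  shows "\<exists>(X :: (real \<Rightarrow> bool) topology) T x y U.
              dynamical_system S X T \<and> x \<in> topspace X \<and> y \<in> topspace X \<and>
              JIUR0 S X T x y \<and> is_nbhd X U y \<and> A = {s\<in>S. T s x \<in> U}"
proof -
  obtain p where p: "p \<in> betaCl S K" "p \<oplus> p = p" "A \<in> p"
    using qc unfolding quasi_central_near_zero_def by blast
  define y where "y t \<longleftrightarrow> {u\<in>S. u + t \<in> A} \<in> p" for t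
  have "y 0" unfolding y_def using p(3) A by (simp add: Int_absorb1 Collect_conj_eq subset_eq)
  then have "is_nbhd bool_product {f. f 0} y"
    unfolding is_nbhd_def using openin_bool_product_coordinate by auto
  moreover have "A = {s\<in>S. shift s (\<lambda>t. t \<in> A) \<in> {f. f 0}}" unfolding shift_def using A by auto
  moreover have "JIUR0 S bool_product shift (\<lambda>t. t \<in> A) y" using JIUR0_shift[OF p(1,2)] y_def by blast
  ultimately show ?thesis using dynamical_system_shift by fastforce
qed

end

theorem theorem3p6:
  fixes S A :: "real set"
  assumes "dense_subsemigroup S" and "A \<subseteq> S"
  shows "(quasi_central_near_zero S A \<longleftrightarrow>
           (\<exists>(X :: (real \<Rightarrow> bool) topology) T x y U.
              dynamical_system S X T \<and> x \<in> topspace X \<and> y \<in> topspace X \<and>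
              JIUR0 S X T x y \<and> is_nbhd X U y \<and> A = {s\<in>S. T s x \<in> U}))
       \<and> (\<forall>(X :: 'a topology) T x y U.
              dynamical_system S X T \<and> x \<in> topspace X \<and> y \<in> topspace X \<and>
              JIUR0 S X T x y \<and> is_nbhd X U y \<and> A = {s\<in>S. T s x \<in> U}
              \<longrightarrow> quasi_central_near_zero S A)"
proof -
  interpret dense_semigroup S using assms(1) by unfold_locales
  show ?thesis
  proof (intro conjI iffI allI impI)
    assume "quasi_central_near_zero S A"
    then show "\<exists>(X :: (real \<Rightarrow> bool) topology) T x y U.
              dynamical_system S X T \<and> x \<in> topspace X \<and> y \<in> topspace X \<and>
              JIUR0 S X T x y \<and> is_nbhd X U y \<and> A = {s\<in>S. T s x \<in> U}"
      by (rule JIUR0_if_quasi_central_near_zero[OF _ assms(2)])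
  next
    assume "\<exists>(X :: (real \<Rightarrow> bool) topology) T x y U.
              dynamical_system S X T \<and> x \<in> topspace X \<and> y \<in> topspace X \<and>
              JIUR0 S X T x y \<and> is_nbhd X U y \<and> A = {s\<in>S. T s x \<in> U}"
    then show "quasi_central_near_zero S A"
      by (elim exE conjE) (rule quasi_central_near_zero_if_JIUR0)
  qed (elim conjE, rule quasi_central_near_zero_if_JIUR0)
qed

end
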